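(* Let $N>2s$, $s\in(0,1)$, $\varepsilon>0$, and let $V\in C(\mathbb{R}^N;[0,\infty))$ satisfy $\liminf_{|x|\to\infty}V(x)|x|^{2s}>0$. Let $K$ be a nonnegative continuous function on $\mathbb{R}^N$ with $\limsup_{|x|\to\infty}K(x)|x|^t<+\infty$ for some $t>2s$. Then the embedding $H^s_{V,\varepsilon}(\mathbb{R}^N)\subset L^2(\mathbb{R}^N,K\,dx)$ is compact.
   Context: $H^s_{V,\varepsilon}(\mathbb{R}^N)$ is the space of $u$ with $(-\Delta)^{s/2}u\in L^2(\mathbb{R}^N)$ and $u\in L^2(\mathbb{R}^N,Vdx)$, with norm $\|u\|^2=\int\varepsilon^{2s}|(-\Delta)^{s/2}u|^2+Vu^2$, where $\int|(-\Delta)^{s/2}u|^2=\int_{\mathbb{R}^{2N}}\frac{|u(x)-u(y)|^2}{|x-y|^{N+2s}}dxdy$. *)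

theory Defs
  imports "HOL-Analysis.Analysis"
begin

text \<open>Gagliardo seminorm squared:
  int_{R^N x R^N} |u x - u y|^2 / |x - y|^(N + 2 s) dx dy, where N = DIM('a).
  (On the null diagonal x = y the integrand is 0 by the convention x / 0 = 0.)\<close>
definition gagliardo_sq :: "real \<Rightarrow> ('a::euclidean_space \<Rightarrow> real) \<Rightarrow> ennreal" where
  "gagliardo_sq s u =
     (\<integral>\<^sup>+ x. \<integral>\<^sup>+ y. ennreal ((u x - u y)\<^sup>2 / norm (x - y) powr (real DIM('a) + 2 * s)) \<partial>lborel \<partial>lborel)"

definition weighted_sq :: "('a::euclidean_space \<Rightarrow> real) \<Rightarrow> ('a \<Rightarrow> real) \<Rightarrow> ennreal" where
  "weighted_sq W u = (\<integral>\<^sup>+ x. ennreal (W x * (u x)\<^sup>2) \<partial>lborel)"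

definition HsV_norm_sq :: "real \<Rightarrow> real \<Rightarrow> ('a::euclidean_space \<Rightarrow> real) \<Rightarrow> ('a \<Rightarrow> real) \<Rightarrow> ennreal" where
  "HsV_norm_sq s eps V u = ennreal (eps powr (2 * s)) * gagliardo_sq s u + weighted_sq V u"

definition HsV :: "real \<Rightarrow> real \<Rightarrow> ('a::euclidean_space \<Rightarrow> real) \<Rightarrow> ('a \<Rightarrow> real) set" where
  "HsV s eps V = {u. u \<in> borel_measurable lborel \<and> gagliardo_sq s u < \<infinity> \<and> weighted_sq V u < \<infinity>}"

definition L2w :: "('a::euclidean_space \<Rightarrow> real) \<Rightarrow> ('a \<Rightarrow> real) set" where
  "L2w K = {u. u \<in> borel_measurable lborel \<and> weighted_sq K u < \<infinity>}"

definition compact_embedding_HsV_L2w ::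
  "real \<Rightarrow> real \<Rightarrow> ('a::euclidean_space \<Rightarrow> real) \<Rightarrow> ('a \<Rightarrow> real) \<Rightarrow> bool" where
  "compact_embedding_HsV_L2w s eps V K \<longleftrightarrow>
     HsV s eps V \<subseteq> L2w K \<and>
     (\<forall>u :: nat \<Rightarrow> 'a \<Rightarrow> real. \<forall>C :: real.
        (\<forall>k. u k \<in> HsV s eps V \<and> HsV_norm_sq s eps V (u k) \<le> ennreal C) \<longrightarrow>
        (\<exists>r v. strict_mono r \<and> v \<in> L2w K \<and>
               (\<lambda>k. weighted_sq K (\<lambda>x. u (r k) x - v x)) \<longlonglongrightarrow> 0))"

end

theory Submission
  imports Defs "HOL-Library.Diagonal_Subsequence"
begin

text \<open>Cut a large centred cube into a grid of small cells. On each cell the Gagliardo seminorm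
  controls the L^2 distance of u to a constant (a fractional Poincare inequality whose constant
  is a power of the mesh, hence small). A bounded sequence thus has, on the big cube, a
  subsequence whose cell constants converge, so that it is uniformly close there. Outside the
  cube the decay hypotheses give K \<le> \<eta> V with \<eta> small, so that part of the K-weighted norm is
  controlled by the V-weighted one. A diagonal argument yields a subsequence that is Cauchy at a
  geometric rate in L^2(K dx), and such a sequence converges pointwise almost everywhere on
  {K > 0} and in L^2(K dx) by Fatou's lemma.\<close>

definition gagliardo_kernel :: "real \<Rightarrow> ('a::euclidean_space \<Rightarrow> real) \<Rightarrow> 'a \<Rightarrow> 'a \<Rightarrow> ennreal" where
  "gagliardo_kernel s u x y = ennreal ((u x - u y)\<^sup>2 / norm (x - y) powr (real DIM('a) + 2 * s))"

lemma gagliardo_sq_eq_kernel: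
  "gagliardo_sq s u = (\<integral>\<^sup>+ x. \<integral>\<^sup>+ y. gagliardo_kernel s u x y \<partial>lborel \<partial>lborel)"
  by (simp add: gagliardo_sq_def gagliardo_kernel_def)

lemma gagliardo_kernel_measurable_pair[measurable]:
  assumes [measurable]: "u \<in> borel_measurable lborel"
  shows "(\<lambda>(x, y). gagliardo_kernel s u x y) \<in> borel_measurable (lborel \<Otimes>\<^sub>M lborel)"
  unfolding gagliardo_kernel_def by measurable

lemma gagliardo_kernel_measurable[measurable]:
  assumes [measurable]: "u \<in> borel_measurable lborel"
  shows "gagliardo_kernel s u x \<in> borel_measurable lborel"
  unfolding gagliardo_kernel_def by measurable

lemma sq_diff_le_gagliardo_kernel:
  fixes u :: "'a::euclidean_space \<Rightarrow> real"
  assumes "norm (x - y) \<le> D" "0 < s"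
  shows "ennreal ((u x - u y)\<^sup>2) \<le> ennreal (D powr (real DIM('a) + 2 * s)) * gagliardo_kernel s u x y"
proof (cases "x = y")
  case True then show ?thesis by simp
next
  case False
  define n where "n = norm (x - y)"
  define p where "p = real DIM('a) + 2 * s"
  have n: "n > 0" using False by (simp add: n_def)
  have p: "p > 0" using assms by (simp add: p_def add_pos_pos)
  have "(u x - u y)\<^sup>2 = n powr p * ((u x - u y)\<^sup>2 / n powr p)" using n by simp
  also have "\<dots> \<le> D powr p * ((u x - u y)\<^sup>2 / n powr p)"
    by (intro mult_right_mono powr_mono2) (use assms n p in \<open>auto simp: n_def\<close>)
  finally have "ennreal ((u x - u y)\<^sup>2) \<le> ennreal (D powr p * ((u x - u y)\<^sup>2 / n powr p))"
    by (rule ennreal_leI)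
  also have "\<dots> = ennreal (D powr p) * gagliardo_kernel s u x y"
    unfolding gagliardo_kernel_def n_def p_def by (rule ennreal_mult) auto
  finally show ?thesis unfolding p_def .
qed

lemma sq_le_2_sq_diff_2_sq: "(a::real)\<^sup>2 \<le> 2 * (a - b)\<^sup>2 + 2 * b\<^sup>2"
proof -
  have "2 * (a - b)\<^sup>2 + 2 * b\<^sup>2 - a\<^sup>2 = (a - 2 * b)\<^sup>2" by (simp add: power2_eq_square algebra_simps)
  then show ?thesis by (metis diff_ge_0_iff_ge zero_le_power2)
qed

lemma sq_diff_add_le_3_sq: "((a::real) - b + c)\<^sup>2 \<le> 3 * a\<^sup>2 + 3 * b\<^sup>2 + 3 * c\<^sup>2"
proof -
  have "3 * a\<^sup>2 + 3 * b\<^sup>2 + 3 * c\<^sup>2 - (a - b + c)\<^sup>2 = (a + b)\<^sup>2 + (a - c)\<^sup>2 + (b + c)\<^sup>2"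
    by (simp add: power2_eq_square algebra_simps)
  moreover have "(a + b)\<^sup>2 + (a - c)\<^sup>2 + (b + c)\<^sup>2 \<ge> 0" by simp
  ultimately show ?thesis by linarith
qed

lemma ennreal_2_mul_add:
  "0 \<le> a \<Longrightarrow> 0 \<le> b \<Longrightarrow> ennreal (2 * a + 2 * b) = 2 * ennreal a + 2 * ennreal b"
  by (subst ennreal_plus; simp add: ennreal_mult)

lemma ennreal_plus3:
  "0 \<le> a \<Longrightarrow> 0 \<le> b \<Longrightarrow> 0 \<le> c \<Longrightarrow> ennreal a + ennreal b + ennreal c = ennreal (a + b + c)"
  by simp

lemma ennreal_mult_add:
  "0 \<le> a \<Longrightarrow> 0 \<le> b \<Longrightarrow> 0 \<le> x \<Longrightarrow> 0 \<le> y \<Longrightarrow>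
    ennreal a * ennreal x + ennreal b * ennreal y = ennreal (a * x + b * y)"
  by (simp add: ennreal_mult)

lemma weighted_sq_diff_le:
  fixes W f g :: "'a::euclidean_space \<Rightarrow> real"
  assumes [measurable]: "W \<in> borel_measurable lborel" "f \<in> borel_measurable lborel"
    "g \<in> borel_measurable lborel" and W: "\<And>x. 0 \<le> W x"
  shows "weighted_sq W (\<lambda>x. f x - g x) \<le> 2 * weighted_sq W f + 2 * weighted_sq W g"
proof -
  have "ennreal (W x * (f x - g x)\<^sup>2) \<le> 2 * ennreal (W x * (f x)\<^sup>2) + 2 * ennreal (W x * (g x)\<^sup>2)" for x
  proof -
    have "(f x - g x)\<^sup>2 \<le> 2 * (f x)\<^sup>2 + 2 * (g x)\<^sup>2"
      using sq_le_2_sq_diff_2_sq[of "f x - g x" "- g x"] by simp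
    then have "W x * (f x - g x)\<^sup>2 \<le> W x * (2 * (f x)\<^sup>2 + 2 * (g x)\<^sup>2)"
      by (rule mult_left_mono[OF _ W])
    then have "W x * (f x - g x)\<^sup>2 \<le> 2 * (W x * (f x)\<^sup>2) + 2 * (W x * (g x)\<^sup>2)"
      by (simp add: algebra_simps)
    then have "ennreal (W x * (f x - g x)\<^sup>2) \<le> ennreal (2 * (W x * (f x)\<^sup>2) + 2 * (W x * (g x)\<^sup>2))"
      by (rule ennreal_leI)
    also have "\<dots> = 2 * ennreal (W x * (f x)\<^sup>2) + 2 * ennreal (W x * (g x)\<^sup>2)"
      using W[of x] by (intro ennreal_2_mul_add) auto
    finally show ?thesis .
  qed
  then have "weighted_sq W (\<lambda>x. f x - g x)
      \<le> (\<integral>\<^sup>+x. 2 * ennreal (W x * (f x)\<^sup>2) + 2 * ennreal (W x * (g x)\<^sup>2) \<partial>lborel)"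
    unfolding weighted_sq_def by (intro nn_integral_mono)
  also have "\<dots> = 2 * weighted_sq W f + 2 * weighted_sq W g"
    unfolding weighted_sq_def by (subst nn_integral_add) (auto simp: nn_integral_cmult)
  finally show ?thesis .
qed

lemma exists_point_le_average:
  assumes q[measurable]: "q \<in> sets lborel" "emeasure lborel q \<noteq> 0" "emeasure lborel q < \<infinity>"
    and h[measurable]: "h \<in> borel_measurable lborel"
    and int: "(\<integral>\<^sup>+y. indicator q y * h y \<partial>lborel) \<le> X" and X: "X < \<infinity>"
  shows "\<exists>y\<in>q. h y * emeasure lborel q \<le> X"
proof (rule ccontr)
  assume "\<not> ?thesis"
  then have lt: "\<forall>y\<in>q. X < h y * emeasure lborel q" by (auto simp: not_le)
  obtain mq where mq: "emeasure lborel q = ennreal mq" "0 \<le> mq"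
    using q(3) by (cases "emeasure lborel q") auto
  have mq0: "mq > 0" using mq q(2) by (auto simp: less_le)
  obtain x where x: "X = ennreal x" "0 \<le> x" using X by (cases X) auto
  define f where "f y = ennreal (x / mq) * indicator q y" for y
  have intf: "(\<integral>\<^sup>+y. f y \<partial>lborel) = X"
    unfolding f_def using mq mq0 x q
    by (subst nn_integral_cmult_indicator) (auto simp: ennreal_mult[symmetric])
  have above: "ennreal (x / mq) < h y" if "y \<in> q" for y
  proof (rule ccontr)
    assume "\<not> ?thesis"
    then have "h y * ennreal mq \<le> ennreal (x / mq) * ennreal mq"
      by (intro mult_right_mono) (simp_all add: not_less)
    also have "\<dots> = X" using mq0 x by (simp add: ennreal_mult[symmetric])
    finally show False using lt that mq by (simp add: not_le[symmetric])
  qed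
  have "(\<integral>\<^sup>+y. f y \<partial>lborel) < (\<integral>\<^sup>+y. indicator q y * h y \<partial>lborel)"
  proof (rule nn_integral_less)
    show "f \<in> borel_measurable lborel" unfolding f_def by measurable
    show "integral\<^sup>N lborel f \<noteq> \<infinity>" using intf X by simp
    show "AE y in lborel. f y \<le> indicator q y * h y"
      using above by (auto simp: f_def indicator_def less_imp_le)
    show "\<not> (AE y in lborel. indicator q y * h y \<le> f y)"
    proof
      assume "AE y in lborel. indicator q y * h y \<le> f y"
      then have "AE y in lborel. y \<notin> q"
        by eventually_elim (use above in \<open>force simp: f_def indicator_def not_le[symmetric]\<close>)
      then have "emeasure lborel q = 0"
        using AE_iff_measurable[of q lborel "\<lambda>y. y \<notin> q"] q(1) by simp
      then show False using q(2) by simp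
    qed
  qed simp
  then show False using int intf by simp
qed

lemma exists_const_L2_dev_le_gagliardo:
  fixes u :: "'a::euclidean_space \<Rightarrow> real"
  assumes q[measurable]: "q \<in> sets lborel" "ennreal \<nu> \<le> emeasure lborel q" "emeasure lborel q < \<infinity>" "\<nu> > 0"
    and D: "\<forall>x\<in>q. \<forall>y\<in>q. norm (x - y) \<le> D" "0 < D" "0 < s"
    and u[measurable]: "u \<in> borel_measurable lborel"
  shows "\<exists>c. (\<integral>\<^sup>+x. indicator q x * ennreal ((u x - c)\<^sup>2) \<partial>lborel)
     \<le> ennreal (D powr (real DIM('a) + 2 * s) / \<nu>) *
        (\<integral>\<^sup>+y. \<integral>\<^sup>+x. indicator q y * indicator q x * gagliardo_kernel s u y x \<partial>lborel \<partial>lborel)"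
proof -
  define p where "p = real DIM('a) + 2 * s"
  define T where "T = (\<integral>\<^sup>+y. \<integral>\<^sup>+x. indicator q y * indicator q x * gagliardo_kernel s u y x \<partial>lborel \<partial>lborel)"
  have Dp: "D powr p / \<nu> > 0" using D q by simp
  show ?thesis
  proof (cases "T = \<infinity>")
    case True
    then show ?thesis using Dp D(2) q(4) unfolding T_def[symmetric] p_def[symmetric]
      by (simp add: ennreal_mult_top)
  next
    case False
    define h where "h y = (\<integral>\<^sup>+x. indicator q x * ennreal ((u x - u y)\<^sup>2) \<partial>lborel)" for y
    have hm[measurable]: "h \<in> borel_measurable lborel" unfolding h_def by measurable
    have "(\<integral>\<^sup>+y. indicator q y * h y \<partial>lborel)
        = (\<integral>\<^sup>+y. \<integral>\<^sup>+x. indicator q y * (indicator q x * ennreal ((u x - u y)\<^sup>2)) \<partial>lborel \<partial>lborel)"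
      unfolding h_def by (intro nn_integral_cong nn_integral_cmult[symmetric]) measurable
    also have "\<dots> \<le> (\<integral>\<^sup>+y. \<integral>\<^sup>+x. ennreal (D powr p) * (indicator q y * indicator q x * gagliardo_kernel s u y x) \<partial>lborel \<partial>lborel)"
    proof (intro nn_integral_mono)
      fix y x
      show "indicator q y * (indicator q x * ennreal ((u x - u y)\<^sup>2))
         \<le> ennreal (D powr p) * (indicator q y * indicator q x * gagliardo_kernel s u y x)"
      proof (cases "x \<in> q \<and> y \<in> q")
        case True
        then have "ennreal ((u y - u x)\<^sup>2) \<le> ennreal (D powr p) * gagliardo_kernel s u y x"
          unfolding p_def using D by (intro sq_diff_le_gagliardo_kernel) auto
        then show ?thesis using True by (simp add: power2_commute)
      qed auto
    qed
    also have "\<dots> = ennreal (D powr p) * T"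
      unfolding T_def
      by (subst nn_integral_cmult[symmetric], measurable)
         (intro nn_integral_cong nn_integral_cmult, measurable)
    finally have int: "(\<integral>\<^sup>+y. indicator q y * h y \<partial>lborel) \<le> ennreal (D powr p) * T" .
    have q0: "emeasure lborel q \<noteq> 0"
    proof
      assume "emeasure lborel q = 0"
      then show False using q(2,4) by simp
    qed
    obtain y where y: "y \<in> q" "h y * emeasure lborel q \<le> ennreal (D powr p) * T"
      using exists_point_le_average[OF q(1) q0 q(3) hm int] False
      by (auto simp: ennreal_mult_less_top top.not_eq_extremum)
    have "h y * ennreal \<nu> \<le> h y * emeasure lborel q" by (intro mult_left_mono q(2)) simp
    then have le: "h y * ennreal \<nu> \<le> ennreal (D powr p) * T" using y(2) by simp
    have "h y = h y * ennreal \<nu> * ennreal (1 / \<nu>)"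
      using q(4) by (simp add: mult.assoc ennreal_mult[symmetric])
    also have "\<dots> \<le> ennreal (D powr p) * T * ennreal (1 / \<nu>)" by (intro mult_right_mono le) simp
    also have "\<dots> = ennreal (D powr p / \<nu>) * T"
      using q(4) by (simp add: ennreal_mult[symmetric] mult_ac divide_inverse)
    finally show ?thesis unfolding h_def T_def p_def by blast
  qed
qed

text \<open>Integrating (u x)^2 \<le> 2 (u x - u y)^2 + 2 (u y)^2 over x \<in> Q and y \<in> A bounds the
  L^2 norm on Q by the Gagliardo seminorm and the V-weighted norm, provided V is bounded
  below on A.\<close>
lemma L2_on_set_le_gagliardo_weighted:
  fixes u :: "'a::euclidean_space \<Rightarrow> real"
  assumes Q[measurable]: "Q \<in> sets lborel" and A[measurable]: "A \<in> sets lborel"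
    and D: "\<forall>x\<in>Q. \<forall>y\<in>A. norm (x - y) \<le> D" "0 < s"
    and cA: "cA > 0" "\<forall>y\<in>A. cA \<le> V y" and Vm[measurable]: "V \<in> borel_measurable lborel"
    and u[measurable]: "u \<in> borel_measurable lborel"
  shows "emeasure lborel A * (\<integral>\<^sup>+x. indicator Q x * ennreal ((u x)\<^sup>2) \<partial>lborel)
    \<le> 2 * ennreal (D powr (real DIM('a) + 2 * s)) * gagliardo_sq s u
       + emeasure lborel Q * (2 * ennreal (1 / cA) * weighted_sq V u)"
proof -
  define p where "p = real DIM('a) + 2 * s"
  define W where "W = weighted_sq V u"
  have pointwise: "(indicator Q x * ennreal ((u x)\<^sup>2)) * indicator A y
     \<le> 2 * ennreal (D powr p) * gagliardo_kernel s u x y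
       + indicator Q x * (2 * ennreal (1 / cA) * (indicator A y * ennreal (V y * (u y)\<^sup>2)))"
    for x y
  proof (cases "x \<in> Q \<and> y \<in> A")
    case True
    have V: "cA \<le> V y" using cA True by auto
    have "ennreal ((u x)\<^sup>2) \<le> ennreal (2 * (u x - u y)\<^sup>2 + 2 * (u y)\<^sup>2)"
      by (intro ennreal_leI sq_le_2_sq_diff_2_sq)
    also have "\<dots> = 2 * ennreal ((u x - u y)\<^sup>2) + 2 * ennreal ((u y)\<^sup>2)"
      by (rule ennreal_2_mul_add) simp_all
    also have "\<dots> \<le> 2 * (ennreal (D powr p) * gagliardo_kernel s u x y)
        + 2 * (ennreal (1 / cA) * ennreal (V y * (u y)\<^sup>2))"
    proof (intro add_mono mult_left_mono)
      show "ennreal ((u x - u y)\<^sup>2) \<le> ennreal (D powr p) * gagliardo_kernel s u x y"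
        unfolding p_def using D True by (intro sq_diff_le_gagliardo_kernel) auto
      have "(u y)\<^sup>2 \<le> (1 / cA) * (V y * (u y)\<^sup>2)"
        using V cA by (simp add: field_simps mult_right_mono)
      then show "ennreal ((u y)\<^sup>2) \<le> ennreal (1 / cA) * ennreal (V y * (u y)\<^sup>2)"
        using cA V by (simp add: ennreal_leI flip: ennreal_mult)
    qed auto
    finally show ?thesis using True by (simp add: mult_ac)
  qed auto
  have inner: "(indicator Q x * ennreal ((u x)\<^sup>2)) * emeasure lborel A
     \<le> 2 * ennreal (D powr p) * (\<integral>\<^sup>+y. gagliardo_kernel s u x y \<partial>lborel)
       + indicator Q x * (2 * ennreal (1 / cA) * W)" for x
  proof -
    have "(indicator Q x * ennreal ((u x)\<^sup>2)) * emeasure lborel A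
       = (\<integral>\<^sup>+y. (indicator Q x * ennreal ((u x)\<^sup>2)) * indicator A y \<partial>lborel)"
      by (rule nn_integral_cmult_indicator[symmetric]) (use A in simp)
    also have "\<dots> \<le> (\<integral>\<^sup>+y. 2 * ennreal (D powr p) * gagliardo_kernel s u x y
        + indicator Q x * (2 * ennreal (1 / cA) * (indicator A y * ennreal (V y * (u y)\<^sup>2))) \<partial>lborel)"
      by (intro nn_integral_mono pointwise)
    also have "\<dots> = 2 * ennreal (D powr p) * (\<integral>\<^sup>+y. gagliardo_kernel s u x y \<partial>lborel)
        + indicator Q x * (2 * ennreal (1 / cA) * (\<integral>\<^sup>+y. indicator A y * ennreal (V y * (u y)\<^sup>2) \<partial>lborel))"
      by (simp add: nn_integral_add nn_integral_cmult)
    also have "\<dots> \<le> 2 * ennreal (D powr p) * (\<integral>\<^sup>+y. gagliardo_kernel s u x y \<partial>lborel)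
        + indicator Q x * (2 * ennreal (1 / cA) * W)"
      unfolding W_def weighted_sq_def
      by (intro add_mono mult_left_mono nn_integral_mono order_refl) (auto simp: indicator_def)
    finally show ?thesis .
  qed
  have "emeasure lborel A * (\<integral>\<^sup>+x. indicator Q x * ennreal ((u x)\<^sup>2) \<partial>lborel)
      = (\<integral>\<^sup>+x. (indicator Q x * ennreal ((u x)\<^sup>2)) * emeasure lborel A \<partial>lborel)"
    by (subst nn_integral_multc) (auto simp: mult_ac)
  also have "\<dots> \<le> (\<integral>\<^sup>+x. 2 * ennreal (D powr p) * (\<integral>\<^sup>+y. gagliardo_kernel s u x y \<partial>lborel)
      + indicator Q x * (2 * ennreal (1 / cA) * W) \<partial>lborel)"
    by (intro nn_integral_mono inner)
  also have "\<dots> = 2 * ennreal (D powr p) * gagliardo_sq s u + emeasure lborel Q * (2 * ennreal (1 / cA) * W)"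
    unfolding gagliardo_sq_eq_kernel
    using Q by (subst nn_integral_add) (auto simp: nn_integral_cmult nn_integral_multc mult_ac)
  finally show ?thesis unfolding p_def W_def .
qed

lemma const_sq_le_of_L2_dev:
  fixes u :: "'a::euclidean_space \<Rightarrow> real"
  assumes [measurable]: "q \<in> sets lborel" "Q \<in> sets lborel" "u \<in> borel_measurable lborel"
    and "q \<subseteq> Q" "0 < \<nu>" "ennreal \<nu> \<le> emeasure lborel q"
    and dev: "(\<integral>\<^sup>+x. indicator q x * ennreal ((u x - c)\<^sup>2) \<partial>lborel) \<le> ennreal X"
    and L2: "(\<integral>\<^sup>+x. indicator Q x * ennreal ((u x)\<^sup>2) \<partial>lborel) \<le> ennreal Y"
    and "0 \<le> X" "0 \<le> Y"
  shows "c\<^sup>2 \<le> (2 * Y + 2 * X) / \<nu>"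
proof -
  have "ennreal (c\<^sup>2 * \<nu>) = ennreal (c\<^sup>2) * ennreal \<nu>"
    by (rule ennreal_mult) (use assms in auto)
  also have "\<dots> \<le> ennreal (c\<^sup>2) * emeasure lborel q"
    by (intro mult_left_mono assms) auto
  also have "\<dots> = (\<integral>\<^sup>+x. ennreal (c\<^sup>2) * indicator q x \<partial>lborel)"
    by (rule nn_integral_cmult_indicator[symmetric]) (use assms(1) in simp)
  also have "\<dots> \<le> (\<integral>\<^sup>+x. 2 * (indicator Q x * ennreal ((u x)\<^sup>2))
      + 2 * (indicator q x * ennreal ((u x - c)\<^sup>2)) \<partial>lborel)"
  proof (intro nn_integral_mono)
    fix x
    show "ennreal (c\<^sup>2) * indicator q x
      \<le> 2 * (indicator Q x * ennreal ((u x)\<^sup>2)) + 2 * (indicator q x * ennreal ((u x - c)\<^sup>2))"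
    proof (cases "x \<in> q")
      case True
      have "c\<^sup>2 \<le> 2 * (u x)\<^sup>2 + 2 * (u x - c)\<^sup>2"
        using sq_le_2_sq_diff_2_sq[of c "c - u x"] by (simp add: power2_commute)
      then have "ennreal (c\<^sup>2) \<le> ennreal (2 * (u x)\<^sup>2 + 2 * (u x - c)\<^sup>2)"
        by (rule ennreal_leI)
      also have "\<dots> = 2 * ennreal ((u x)\<^sup>2) + 2 * ennreal ((u x - c)\<^sup>2)"
        by (rule ennreal_2_mul_add) simp_all
      finally have "ennreal (c\<^sup>2) \<le> 2 * ennreal ((u x)\<^sup>2) + 2 * ennreal ((u x - c)\<^sup>2)" .
      then show ?thesis using True \<open>q \<subseteq> Q\<close> by auto
    qed simp
  qed
  also have "\<dots> = 2 * (\<integral>\<^sup>+x. indicator Q x * ennreal ((u x)\<^sup>2) \<partial>lborel)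
      + 2 * (\<integral>\<^sup>+x. indicator q x * ennreal ((u x - c)\<^sup>2) \<partial>lborel)"
    by (subst nn_integral_add) (auto simp: nn_integral_cmult)
  also have "\<dots> \<le> 2 * ennreal Y + 2 * ennreal X" by (intro add_mono mult_left_mono L2 dev) auto
  also have "\<dots> = ennreal (2 * Y + 2 * X)" by (rule ennreal_2_mul_add[symmetric]) (use assms in auto)
  finally have "c\<^sup>2 * \<nu> \<le> 2 * Y + 2 * X" using assms by (subst (asm) ennreal_le_iff) auto
  then show ?thesis using assms by (simp add: pos_le_divide_eq)
qed

definition centred_box :: "real \<Rightarrow> 'a::euclidean_space set" where
  "centred_box L = {x. \<forall>b\<in>Basis. -L \<le> x \<bullet> b \<and> x \<bullet> b < L}"

definition grid_cell :: "real \<Rightarrow> real \<Rightarrow> ('a::euclidean_space \<Rightarrow> int) \<Rightarrow> 'a set" where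
  "grid_cell L \<delta> z = {x. \<forall>b\<in>Basis. -L + \<delta> * z b \<le> x \<bullet> b \<and> x \<bullet> b < -L + \<delta> * (z b + 1)}"

definition grid_index :: "nat \<Rightarrow> ('a::euclidean_space \<Rightarrow> int) set" where
  "grid_index m = Basis \<rightarrow>\<^sub>E {0..<int m}"

lemma finite_grid_index[simp]: "finite (grid_index m)"
  unfolding grid_index_def by (intro finite_PiE) auto

lemma sets_centred_box[measurable]: "centred_box L \<in> sets lborel"
proof -
  have "centred_box L = (\<Inter>b\<in>Basis. {x. -L \<le> x \<bullet> b} \<inter> {x. x \<bullet> b < L})"
    unfolding centred_box_def by auto
  also have "\<dots> \<in> sets lborel"
    by (intro sets.finite_INT) (auto intro!: sets.Int simp: finite_Basis)
  finally show ?thesis .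
qed

lemma sets_grid_cell[measurable]: "grid_cell L \<delta> z \<in> sets lborel"
proof -
  have "grid_cell L \<delta> z = (\<Inter>b\<in>Basis. {x. -L + \<delta> * z b \<le> x \<bullet> b} \<inter> {x. x \<bullet> b < -L + \<delta> * (z b + 1)})"
    unfolding grid_cell_def by auto
  also have "\<dots> \<in> sets lborel"
    by (intro sets.finite_INT) (auto intro!: sets.Int simp: finite_Basis)
  finally show ?thesis .
qed

lemma sets_borel_centred_box[simp]: "centred_box L \<in> sets borel"
  using sets_centred_box[of L] by simp

lemma sets_borel_grid_cell[simp]: "grid_cell L \<delta> z \<in> sets borel"
  using sets_grid_cell[of L \<delta> z] by simp

lemma emeasure_centred_box_finite: "emeasure lborel (centred_box L) < \<infinity>"
proof -
  have "centred_box L \<subseteq> cbox (- (\<Sum>b\<in>Basis. L *\<^sub>R b)) (\<Sum>b\<in>Basis. L *\<^sub>R b)"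
    by (auto simp: centred_box_def mem_box inner_sum_left_Basis inner_minus_left less_imp_le)
  then show ?thesis
    by (rule le_less_trans[OF emeasure_mono emeasure_lborel_cbox_finite]) simp
qed

lemma norm_le_on_centred_box:
  fixes x :: "'a::euclidean_space"
  assumes "x \<in> centred_box L"
  shows "norm x \<le> real DIM('a) * L"
proof -
  have "norm x \<le> (\<Sum>b\<in>Basis. \<bar>x \<bullet> b\<bar>)" by (rule norm_le_l1)
  also have "\<dots> \<le> (\<Sum>b\<in>(Basis::'a set). L)"
    by (rule sum_mono) (use assms in \<open>auto simp: centred_box_def abs_le_iff\<close>)
  finally show ?thesis by simp
qed

lemma norm_ge_outside_centred_box:
  assumes "x \<notin> centred_box L"
  shows "L \<le> norm x"
proof -
  obtain b where b: "b \<in> Basis" "\<not> (-L \<le> x \<bullet> b \<and> x \<bullet> b < L)"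
    using assms by (auto simp: centred_box_def)
  then have "L \<le> \<bar>x \<bullet> b\<bar>" by auto
  also have "\<dots> \<le> norm x" using b by (intro Basis_le_norm)
  finally show ?thesis .
qed

lemma continuous_bounded_on_centred_box:
  fixes K :: "'a::euclidean_space \<Rightarrow> real"
  assumes "continuous_on UNIV K"
  shows "\<exists>M>0. \<forall>x\<in>centred_box L. K x \<le> M"
proof -
  have "compact (K ` cball 0 (real DIM('a) * L))"
    by (intro compact_continuous_image continuous_on_subset[OF assms]) auto
  then obtain M where "M > 0" "\<forall>y\<in>K ` cball 0 (real DIM('a) * L). norm y \<le> M"
    using compact_imp_bounded bounded_pos by metis
  then show ?thesis using norm_le_on_centred_box by force
qed

lemma grid_cell_iff_floor:
  fixes \<delta> L t :: real and k :: int
  assumes "\<delta> > 0"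
  shows "(-L + \<delta> * k \<le> t \<and> t < -L + \<delta> * (k + 1)) \<longleftrightarrow> floor ((t + L) / \<delta>) = k"
  using assms by (simp add: floor_eq_iff pos_le_divide_eq pos_divide_less_eq algebra_simps)

lemma emeasure_grid_cell:
  assumes "\<delta> > 0"
  shows "emeasure lborel (grid_cell L \<delta> z :: 'a::euclidean_space set) = ennreal (\<delta> ^ DIM('a))"
proof -
  define a :: 'a where "a = (\<Sum>b\<in>Basis. (-L + \<delta> * z b) *\<^sub>R b)"
  define a' :: 'a where "a' = (\<Sum>b\<in>Basis. (-L + \<delta> * (z b + 1)) *\<^sub>R b)"
  have a: "a \<bullet> b = -L + \<delta> * z b" "a' \<bullet> b = -L + \<delta> * (z b + 1)" if "b \<in> Basis" for b
    unfolding a_def a'_def using that by (simp_all add: inner_sum_left_Basis)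
  have sides: "(\<Prod>b\<in>Basis. (a' - a) \<bullet> b) = \<delta> ^ DIM('a)"
    by (simp add: inner_diff_left a algebra_simps)
  have "box a a' \<subseteq> grid_cell L \<delta> z"
  proof
    fix x assume "x \<in> box a a'"
    then have "a \<bullet> b < x \<bullet> b \<and> x \<bullet> b < a' \<bullet> b" if "b \<in> Basis" for b
      using that by (auto simp: mem_box)
    then show "x \<in> grid_cell L \<delta> z" unfolding grid_cell_def using a by (force intro: less_imp_le)
  qed
  then have "ennreal (\<delta> ^ DIM('a)) \<le> emeasure lborel (grid_cell L \<delta> z)"
    using assms emeasure_mono[of "box a a'" "grid_cell L \<delta> z" lborel]
    by (simp add: emeasure_lborel_box a sides)
  moreover have "grid_cell L \<delta> z \<subseteq> cbox a a'"
    by (auto simp: grid_cell_def mem_box a less_imp_le)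
  then have "emeasure lborel (grid_cell L \<delta> z) \<le> ennreal (\<delta> ^ DIM('a))"
    using assms emeasure_mono[of "grid_cell L \<delta> z" "cbox a a'" lborel]
    by (simp add: emeasure_lborel_cbox a sides)
  ultimately show ?thesis by (rule antisym[rotated])
qed

lemma grid_cell_diameter:
  fixes x y :: "'a::euclidean_space"
  assumes "x \<in> grid_cell L \<delta> z" "y \<in> grid_cell L \<delta> z"
  shows "norm (x - y) \<le> real DIM('a) * \<delta>"
proof -
  have "norm (x - y) \<le> (\<Sum>b\<in>Basis. \<bar>(x - y) \<bullet> b\<bar>)" by (rule norm_le_l1)
  also have "\<dots> \<le> (\<Sum>b\<in>(Basis::'a set). \<delta>)"
  proof (rule sum_mono)
    fix b :: 'a assume "b \<in> Basis"
    then have "-L + \<delta> * z b \<le> x \<bullet> b" "x \<bullet> b < -L + \<delta> * (z b + 1)"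
      "-L + \<delta> * z b \<le> y \<bullet> b" "y \<bullet> b < -L + \<delta> * (z b + 1)"
      using assms unfolding grid_cell_def by auto
    then show "\<bar>(x - y) \<bullet> b\<bar> \<le> \<delta>"
      by (auto simp: inner_diff_left algebra_simps abs_le_iff)
  qed
  finally show ?thesis by simp
qed

lemma grid_cell_subset_centred_box:
  assumes "z \<in> grid_index m" "m > 0" "L > 0"
  shows "grid_cell L (2 * L / m) z \<subseteq> centred_box L"
proof
  fix x assume x: "x \<in> grid_cell L (2 * L / m) z"
  show "x \<in> centred_box L" unfolding centred_box_def
  proof (intro CollectI ballI conjI)
    fix b :: 'a assume b: "b \<in> Basis"
    have "z b \<in> {0..<int m}" using assms(1) b unfolding grid_index_def by (rule PiE_mem)
    then have z: "0 \<le> z b" "z b + 1 \<le> m" by auto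
    have "-L \<le> -L + 2 * L / m * z b" using z assms by simp
    then show "-L \<le> x \<bullet> b" using x b unfolding grid_cell_def by force
    have "2 * L / m * (z b + 1) \<le> 2 * L / m * m"
      using z assms by (intro mult_left_mono) (auto simp del: of_int_add simp: of_int_add[symmetric])
    then have "-L + 2 * L / m * (z b + 1) \<le> L" using assms by simp
    then show "x \<bullet> b < L" using x b unfolding grid_cell_def by force
  qed
qed

lemma grid_cell_unique:
  assumes "z \<in> grid_index m" "z' \<in> grid_index m" "\<delta> > 0"
    "x \<in> grid_cell L \<delta> z" "x \<in> grid_cell L \<delta> z'"
  shows "z = z'"
proof (rule PiE_ext[OF assms(1,2)[unfolded grid_index_def]])
  fix b :: 'a assume b: "b \<in> Basis"
  have "floor ((x \<bullet> b + L) / \<delta>) = z b" "floor ((x \<bullet> b + L) / \<delta>) = z' b"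
    using assms(4,5) b grid_cell_iff_floor[OF assms(3)] unfolding grid_cell_def by blast+
  then show "z b = z' b" by simp
qed

lemma grid_cells_cover_centred_box:
  assumes "x \<in> centred_box L" "m > 0" "L > 0"
  shows "\<exists>z\<in>grid_index m. x \<in> grid_cell L (2 * L / m) z"
proof -
  define \<delta> where "\<delta> = 2 * L / m"
  have d: "\<delta> > 0" using assms by (simp add: \<delta>_def)
  define z where "z = (\<lambda>b\<in>Basis. floor ((x \<bullet> b + L) / \<delta>))"
  have "z \<in> grid_index m" unfolding grid_index_def
  proof
    fix b :: 'a assume b: "b \<in> Basis"
    have xb: "-L \<le> x \<bullet> b" "x \<bullet> b < L" using assms(1) b by (auto simp: centred_box_def)
    have "0 \<le> (x \<bullet> b + L) / \<delta>" using xb d by simp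
    moreover have "(x \<bullet> b + L) / \<delta> < m" using xb d assms by (simp add: \<delta>_def field_simps)
    ultimately show "z b \<in> {0..<int m}" using b by (auto simp: z_def floor_less_iff)
  qed (simp add: z_def)
  moreover have "x \<in> grid_cell L \<delta> z"
    unfolding grid_cell_def using grid_cell_iff_floor[OF d] by (auto simp: z_def)
  ultimately show ?thesis unfolding \<delta>_def by blast
qed

lemma indicator_centred_box_eq_sum_cells:
  fixes x :: "'a::euclidean_space"
  assumes "m > 0" "L > 0"
  shows "(indicator (centred_box L) x :: ennreal)
    = (\<Sum>z\<in>grid_index m. indicator (grid_cell L (2 * L / m) z) x)"
proof (cases "x \<in> centred_box L")
  case True
  then obtain z0 where z0: "z0 \<in> grid_index m" "x \<in> grid_cell L (2 * L / m) z0"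
    using grid_cells_cover_centred_box assms by blast
  have "(\<Sum>z\<in>grid_index m. indicator (grid_cell L (2 * L / m) z) x :: ennreal)
      = (\<Sum>z\<in>grid_index m. if z = z0 then 1 else 0)"
  proof (rule sum.cong[OF refl])
    fix z assume "z \<in> (grid_index m :: ('a \<Rightarrow> int) set)"
    then have "z \<noteq> z0 \<Longrightarrow> x \<notin> grid_cell L (2 * L / m) z"
      using grid_cell_unique[OF _ z0(1) _ _ z0(2)] assms by auto
    then show "(indicator (grid_cell L (2 * L / m) z) x :: ennreal) = (if z = z0 then 1 else 0)"
      using z0(2) by auto
  qed
  also have "\<dots> = 1" using z0(1) by simp
  finally show ?thesis using True by simp
next
  case False
  then show ?thesis using grid_cell_subset_centred_box[OF _ assms] by (auto simp: indicator_def)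
qed

lemma sum_grid_cell_indicators_le_1:
  fixes x y :: "'a::euclidean_space"
  assumes "m > 0" "L > 0"
  shows "(\<Sum>z\<in>grid_index m. indicator (grid_cell L (2 * L / m) z) x
      * indicator (grid_cell L (2 * L / m) z) y :: ennreal) \<le> 1"
proof -
  have "(\<Sum>z\<in>grid_index m. indicator (grid_cell L (2 * L / m) z) x
      * indicator (grid_cell L (2 * L / m) z) y :: ennreal)
     \<le> (\<Sum>z\<in>grid_index m. indicator (grid_cell L (2 * L / m) z) x)"
    by (intro sum_mono) (auto simp: indicator_def)
  also have "\<dots> = indicator (centred_box L) x"
    by (rule indicator_centred_box_eq_sum_cells[OF assms, symmetric])
  also have "\<dots> \<le> 1" by (simp add: indicator_def)
  finally show ?thesis .
qed

definition outer_unit_cube :: "real \<Rightarrow> 'a::euclidean_space set" where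
  "outer_unit_cube L = box (\<Sum>b\<in>Basis. L *\<^sub>R b) (\<Sum>b\<in>Basis. (L + 1) *\<^sub>R b)"

lemma mem_outer_unit_cube:
  "y \<in> outer_unit_cube L \<longleftrightarrow> (\<forall>b\<in>Basis. L < y \<bullet> b \<and> y \<bullet> b < L + 1)"
  by (simp add: outer_unit_cube_def mem_box inner_sum_left_Basis)

lemma emeasure_outer_unit_cube: "emeasure lborel (outer_unit_cube L :: 'a::euclidean_space set) = 1"
  by (simp add: outer_unit_cube_def emeasure_lborel_box inner_sum_left_Basis inner_diff_left)

lemma norm_outer_unit_cube:
  fixes y :: "'a::euclidean_space"
  assumes "y \<in> outer_unit_cube L" "0 \<le> L"
  shows "L \<le> norm y" "norm y \<le> real DIM('a) * (L + 1)"
proof -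
  obtain b :: 'a where b: "b \<in> Basis" using nonempty_Basis by blast
  have "L \<le> \<bar>y \<bullet> b\<bar>" using assms b by (auto simp: mem_outer_unit_cube)
  also have "\<dots> \<le> norm y" using b by (rule Basis_le_norm)
  finally show "L \<le> norm y" .
  have "norm y \<le> (\<Sum>b\<in>Basis. \<bar>y \<bullet> b\<bar>)" by (rule norm_le_l1)
  also have "\<dots> \<le> (\<Sum>b\<in>(Basis::'a set). L + 1)"
    by (rule sum_mono) (use assms in \<open>force simp: mem_outer_unit_cube\<close>)
  finally show "norm y \<le> real DIM('a) * (L + 1)" by simp
qed

lemma dist_centred_box_outer_unit_cube:
  fixes x y :: "'a::euclidean_space"
  assumes "x \<in> centred_box L" "y \<in> outer_unit_cube L"
  shows "norm (x - y) \<le> real DIM('a) * (2 * L + 1)"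
proof -
  have "norm (x - y) \<le> (\<Sum>b\<in>Basis. \<bar>(x - y) \<bullet> b\<bar>)" by (rule norm_le_l1)
  also have "\<dots> \<le> (\<Sum>b\<in>(Basis::'a set). 2 * L + 1)"
  proof (rule sum_mono)
    fix b :: 'a assume b: "b \<in> Basis"
    have "-L \<le> x \<bullet> b" "x \<bullet> b < L" "L < y \<bullet> b" "y \<bullet> b < L + 1"
      using assms b by (auto simp: centred_box_def mem_outer_unit_cube)
    then show "\<bar>(x - y) \<bullet> b\<bar> \<le> 2 * L + 1" by (auto simp: inner_diff_left abs_le_iff)
  qed
  finally show ?thesis by simp
qed

lemma sum_grid_cells_gagliardo_le:
  fixes u :: "'a::euclidean_space \<Rightarrow> real"
  assumes "0 < L" "0 < m" and [measurable]: "u \<in> borel_measurable lborel"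
  shows "(\<Sum>z\<in>grid_index m. \<integral>\<^sup>+y. \<integral>\<^sup>+x. indicator (grid_cell L (2 * L / m) z) y
      * indicator (grid_cell L (2 * L / m) z) x * gagliardo_kernel s u y x \<partial>lborel \<partial>lborel)
    \<le> gagliardo_sq s u"
proof -
  define cell where "cell z = (grid_cell L (2 * L / m) z :: 'a set)" for z
  have [measurable]: "cell z \<in> sets lborel" for z by (simp add: cell_def)
  have "(\<Sum>z\<in>grid_index m. \<integral>\<^sup>+y. \<integral>\<^sup>+x. indicator (cell z) y * indicator (cell z) x
      * gagliardo_kernel s u y x \<partial>lborel \<partial>lborel)
    = (\<integral>\<^sup>+y. \<integral>\<^sup>+x. (\<Sum>z\<in>grid_index m. indicator (cell z) y * indicator (cell z) x
      * gagliardo_kernel s u y x) \<partial>lborel \<partial>lborel)"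
    by (subst nn_integral_sum[symmetric], measurable)
       (intro nn_integral_cong nn_integral_sum[symmetric], measurable)
  also have "\<dots> \<le> (\<integral>\<^sup>+y. \<integral>\<^sup>+x. gagliardo_kernel s u y x \<partial>lborel \<partial>lborel)"
  proof (intro nn_integral_mono)
    fix y x
    have "(\<Sum>z\<in>grid_index m. indicator (cell z) y * indicator (cell z) x * gagliardo_kernel s u y x)
      = (\<Sum>z\<in>grid_index m. indicator (cell z) y * indicator (cell z) x :: ennreal) * gagliardo_kernel s u y x"
      by (rule sum_distrib_right[symmetric])
    also have "\<dots> \<le> 1 * gagliardo_kernel s u y x"
      unfolding cell_def using sum_grid_cell_indicators_le_1 assms(1,2) by (intro mult_right_mono) auto
    finally show "(\<Sum>z\<in>grid_index m. indicator (cell z) y * indicator (cell z) x * gagliardo_kernel s u y x)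
      \<le> gagliardo_kernel s u y x"
      by simp
  qed
  finally show ?thesis by (simp add: gagliardo_sq_eq_kernel cell_def)
qed

text \<open>Fractional Poincare inequality on the grid: on a cell of side \<delta> and diameter N \<delta>,
  the deviation from a suitable constant is bounded by (N \<delta>)^(N+2s) / \<delta>^N = N^(N+2s) \<delta>^(2s)
  times the part of the Gagliardo seminorm over the cell, and the cells are disjoint.\<close>
lemma grid_poincare:
  fixes u :: "'a::euclidean_space \<Rightarrow> real"
  assumes "0 < s" "0 < L" "0 < m" and u[measurable]: "u \<in> borel_measurable lborel"
  shows "\<exists>c. (\<Sum>z\<in>grid_index m.
      \<integral>\<^sup>+x. indicator (grid_cell L (2 * L / m) z) x * ennreal ((u x - c z)\<^sup>2) \<partial>lborel)
    \<le> ennreal (real DIM('a) powr (real DIM('a) + 2 * s) * (2 * L / m) powr (2 * s)) * gagliardo_sq s u"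
proof -
  define \<delta> where "\<delta> = 2 * L / m"
  define N where "N = real DIM('a)"
  define \<kappa> where "\<kappa> = N powr (N + 2 * s) * \<delta> powr (2 * s)"
  have \<delta>0: "\<delta> > 0" using assms by (simp add: \<delta>_def)
  define T where "T z = (\<integral>\<^sup>+y. \<integral>\<^sup>+x. indicator (grid_cell L \<delta> z) y * indicator (grid_cell L \<delta> z) x
    * gagliardo_kernel s u y x \<partial>lborel \<partial>lborel)" for z
  have sumT: "(\<Sum>z\<in>grid_index m. T z) \<le> gagliardo_sq s u"
    unfolding T_def \<delta>_def using assms(2,3) by (rule sum_grid_cells_gagliardo_le) simp
  have \<kappa>_eq: "(N * \<delta>) powr (N + 2 * s) / \<delta> ^ DIM('a) = \<kappa>"
  proof -
    have "N > 0" by (simp add: N_def)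
    then have "(N * \<delta>) powr (N + 2 * s) = N powr (N + 2 * s) * (\<delta> ^ DIM('a) * \<delta> powr (2 * s))"
      using \<delta>0 by (simp add: powr_mult powr_add powr_realpow N_def)
    then show ?thesis using \<delta>0 by (simp add: \<kappa>_def)
  qed
  have "\<exists>c. (\<integral>\<^sup>+x. indicator (grid_cell L \<delta> z) x * ennreal ((u x - c)\<^sup>2) \<partial>lborel) \<le> ennreal \<kappa> * T z" for z
  proof -
    have "\<exists>c. (\<integral>\<^sup>+x. indicator (grid_cell L \<delta> z) x * ennreal ((u x - c)\<^sup>2) \<partial>lborel)
      \<le> ennreal ((N * \<delta>) powr (N + 2 * s) / \<delta> ^ DIM('a)) * T z"
      unfolding T_def N_def
      by (rule exists_const_L2_dev_le_gagliardo)
        (use \<delta>0 assms grid_cell_diameter in \<open>auto simp: emeasure_grid_cell\<close>)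
    then show ?thesis unfolding \<kappa>_eq .
  qed
  then obtain c where c: "\<And>z. (\<integral>\<^sup>+x. indicator (grid_cell L \<delta> z) x * ennreal ((u x - c z)\<^sup>2) \<partial>lborel)
      \<le> ennreal \<kappa> * T z"
    by metis
  have "(\<Sum>z\<in>grid_index m. \<integral>\<^sup>+x. indicator (grid_cell L \<delta> z) x * ennreal ((u x - c z)\<^sup>2) \<partial>lborel)
      \<le> (\<Sum>z\<in>grid_index m. ennreal \<kappa> * T z)"
    by (intro sum_mono c)
  also have "\<dots> = ennreal \<kappa> * (\<Sum>z\<in>grid_index m. T z)" by (simp add: sum_distrib_left)
  also have "\<dots> \<le> ennreal \<kappa> * gagliardo_sq s u" by (intro mult_left_mono sumT) simp
  finally show ?thesis unfolding \<kappa>_def \<delta>_def N_def by blast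
qed

lemma centred_box_L2_dist_le_cell_devs:
  fixes f g :: "'a::euclidean_space \<Rightarrow> real" and cf cg :: "('a \<Rightarrow> int) \<Rightarrow> real"
  assumes "0 < L" "0 < m" and [measurable]: "f \<in> borel_measurable lborel" "g \<in> borel_measurable lborel"
  shows "(\<integral>\<^sup>+x. indicator (centred_box L) x * ennreal ((f x - g x)\<^sup>2) \<partial>lborel)
    \<le> 3 * (\<Sum>z\<in>grid_index m. \<integral>\<^sup>+x. indicator (grid_cell L (2 * L / m) z) x * ennreal ((f x - cf z)\<^sup>2) \<partial>lborel)
      + 3 * (\<Sum>z\<in>grid_index m. \<integral>\<^sup>+x. indicator (grid_cell L (2 * L / m) z) x * ennreal ((g x - cg z)\<^sup>2) \<partial>lborel)
      + 3 * (ennreal (\<Sum>z\<in>grid_index m. (cf z - cg z)\<^sup>2) * emeasure lborel (centred_box L :: 'a set))"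
proof -
  define cell where "cell z = (grid_cell L (2 * L / m) z :: 'a set)" for z
  define df where "df z = (\<integral>\<^sup>+x. indicator (cell z) x * ennreal ((f x - cf z)\<^sup>2) \<partial>lborel)" for z
  define dg where "dg z = (\<integral>\<^sup>+x. indicator (cell z) x * ennreal ((g x - cg z)\<^sup>2) \<partial>lborel)" for z
  have cell_sets[measurable]: "cell z \<in> sets lborel" for z by (simp add: cell_def)
  have "(\<integral>\<^sup>+x. indicator (centred_box L) x * ennreal ((f x - g x)\<^sup>2) \<partial>lborel)
      = (\<integral>\<^sup>+x. (\<Sum>z\<in>grid_index m. indicator (cell z) x * ennreal ((f x - g x)\<^sup>2)) \<partial>lborel)"
    unfolding cell_def indicator_centred_box_eq_sum_cells[OF assms(2,1)] by (simp add: sum_distrib_right)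
  also have "\<dots> = (\<Sum>z\<in>grid_index m. \<integral>\<^sup>+x. indicator (cell z) x * ennreal ((f x - g x)\<^sup>2) \<partial>lborel)"
    by (rule nn_integral_sum) measurable
  also have "\<dots> \<le> (\<Sum>z\<in>grid_index m. 3 * df z + 3 * dg z
      + 3 * (ennreal ((cf z - cg z)\<^sup>2) * emeasure lborel (centred_box L :: 'a set)))"
  proof (intro sum_mono)
    fix z assume z: "z \<in> (grid_index m :: ('a \<Rightarrow> int) set)"
    have "(\<integral>\<^sup>+x. indicator (cell z) x * ennreal ((f x - g x)\<^sup>2) \<partial>lborel)
        \<le> (\<integral>\<^sup>+x. 3 * (indicator (cell z) x * ennreal ((f x - cf z)\<^sup>2))
           + 3 * (indicator (cell z) x * ennreal ((g x - cg z)\<^sup>2))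
           + 3 * (ennreal ((cf z - cg z)\<^sup>2) * indicator (cell z) x) \<partial>lborel)"
    proof (intro nn_integral_mono)
      fix x
      have "(f x - g x)\<^sup>2 = ((f x - cf z) - (g x - cg z) + (cf z - cg z))\<^sup>2"
        by (simp add: algebra_simps)
      also have "\<dots> \<le> 3 * (f x - cf z)\<^sup>2 + 3 * (g x - cg z)\<^sup>2 + 3 * (cf z - cg z)\<^sup>2"
        by (rule sq_diff_add_le_3_sq)
      finally have "ennreal ((f x - g x)\<^sup>2)
          \<le> ennreal (3 * (f x - cf z)\<^sup>2 + 3 * (g x - cg z)\<^sup>2 + 3 * (cf z - cg z)\<^sup>2)"
        by (rule ennreal_leI)
      also have "\<dots> = 3 * ennreal ((f x - cf z)\<^sup>2) + 3 * ennreal ((g x - cg z)\<^sup>2) + 3 * ennreal ((cf z - cg z)\<^sup>2)"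
        by (simp add: ennreal_mult')
      finally show "indicator (cell z) x * ennreal ((f x - g x)\<^sup>2)
          \<le> 3 * (indicator (cell z) x * ennreal ((f x - cf z)\<^sup>2))
           + 3 * (indicator (cell z) x * ennreal ((g x - cg z)\<^sup>2))
           + 3 * (ennreal ((cf z - cg z)\<^sup>2) * indicator (cell z) x)"
        by (cases "x \<in> cell z") auto
    qed
    also have "\<dots> = 3 * df z + 3 * dg z + 3 * (ennreal ((cf z - cg z)\<^sup>2) * emeasure lborel (cell z))"
      unfolding df_def dg_def cell_def by (simp add: nn_integral_add nn_integral_cmult)
    also have "\<dots> \<le> 3 * df z + 3 * dg z + 3 * (ennreal ((cf z - cg z)\<^sup>2) * emeasure lborel (centred_box L :: 'a set))"
    proof -
      have "emeasure lborel (cell z) \<le> emeasure lborel (centred_box L :: 'a set)"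
        unfolding cell_def by (rule emeasure_mono[OF grid_cell_subset_centred_box[OF z assms(2,1)]]) simp
      then show ?thesis by (intro add_mono mult_left_mono order_refl) auto
    qed
    finally show "(\<integral>\<^sup>+x. indicator (cell z) x * ennreal ((f x - g x)\<^sup>2) \<partial>lborel)
      \<le> 3 * df z + 3 * dg z + 3 * (ennreal ((cf z - cg z)\<^sup>2) * emeasure lborel (centred_box L :: 'a set))" .
  qed
  also have "\<dots> = 3 * (\<Sum>z\<in>grid_index m. df z) + 3 * (\<Sum>z\<in>grid_index m. dg z)
      + 3 * (ennreal (\<Sum>z\<in>grid_index m. (cf z - cg z)\<^sup>2) * emeasure lborel (centred_box L :: 'a set))"
    by (simp add: sum.distrib sum_distrib_left sum_distrib_right sum_ennreal[symmetric] del: sum_ennreal)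
  finally show ?thesis unfolding df_def dg_def cell_def .
qed

lemma grid_constants_bounded:
  fixes u :: "nat \<Rightarrow> 'a::euclidean_space \<Rightarrow> real"
  assumes "0 < s" "0 < L" "0 < m" and um[measurable]: "\<And>k. u k \<in> borel_measurable lborel"
    and G: "\<And>k. gagliardo_sq s (u k) \<le> ennreal CG" "0 \<le> CG"
    and Q: "\<And>k. (\<integral>\<^sup>+x. indicator (centred_box L) x * ennreal ((u k x)\<^sup>2) \<partial>lborel) \<le> ennreal HQ" "0 \<le> HQ"
  shows "\<exists>c. (\<forall>k. (\<Sum>z\<in>grid_index m.
      \<integral>\<^sup>+x. indicator (grid_cell L (2 * L / m) z) x * ennreal ((u k x - c k z)\<^sup>2) \<partial>lborel)
        \<le> ennreal (real DIM('a) powr (real DIM('a) + 2 * s) * (2 * L / m) powr (2 * s) * CG))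
    \<and> (\<forall>z\<in>grid_index m. bounded (range (\<lambda>k. c k z)))"
proof -
  define \<kappa> where "\<kappa> = real DIM('a) powr (real DIM('a) + 2 * s) * (2 * L / m) powr (2 * s)"
  define \<delta> where "\<delta> = 2 * L / m"
  have \<kappa>: "0 \<le> \<kappa>" and \<delta>: "0 < \<delta>" using assms by (simp_all add: \<kappa>_def \<delta>_def)
  define dev where "dev k c = (\<Sum>z\<in>grid_index m.
    \<integral>\<^sup>+x. indicator (grid_cell L \<delta> z) x * ennreal ((u k x - c z)\<^sup>2) \<partial>lborel)" for k c
  have "\<exists>c. dev k c \<le> ennreal (\<kappa> * CG)" for k
  proof -
    obtain c where "dev k c \<le> ennreal \<kappa> * gagliardo_sq s (u k)"
      using grid_poincare[OF assms(1-3) um] unfolding dev_def \<delta>_def \<kappa>_def by blast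
    also have "\<dots> \<le> ennreal \<kappa> * ennreal CG" by (intro mult_left_mono G) simp
    also have "\<dots> = ennreal (\<kappa> * CG)" using \<kappa> by (simp add: ennreal_mult')
    finally show ?thesis by blast
  qed
  then obtain c where c: "\<And>k. dev k (c k) \<le> ennreal (\<kappa> * CG)" by metis
  have "bounded (range (\<lambda>k. c k z))" if z: "z \<in> grid_index m" for z
  proof -
    have "(c k z)\<^sup>2 \<le> (2 * HQ + 2 * (\<kappa> * CG)) / \<delta> ^ DIM('a)" for k
    proof (rule const_sq_le_of_L2_dev)
      have "(\<integral>\<^sup>+x. indicator (grid_cell L \<delta> z) x * ennreal ((u k x - c k z)\<^sup>2) \<partial>lborel) \<le> dev k (c k)"
        unfolding dev_def by (rule member_le_sum) (use z in auto)
      then show "(\<integral>\<^sup>+x. indicator (grid_cell L \<delta> z) x * ennreal ((u k x - c k z)\<^sup>2) \<partial>lborel)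
          \<le> ennreal (\<kappa> * CG)"
        using c[of k] by (rule order_trans)
      show "grid_cell L \<delta> z \<subseteq> centred_box L"
        unfolding \<delta>_def by (rule grid_cell_subset_centred_box[OF z assms(3,2)])
    qed (use \<delta> Q \<kappa> G in \<open>simp_all add: emeasure_grid_cell\<close>)
    then have "\<bar>c k z\<bar> \<le> sqrt ((2 * HQ + 2 * (\<kappa> * CG)) / \<delta> ^ DIM('a))" for k
      by (intro real_le_rsqrt) simp
    then show ?thesis unfolding bounded_iff by auto
  qed
  then show ?thesis using c unfolding dev_def \<delta>_def \<kappa>_def by blast
qed

lemma finite_family_convergent_subseq:
  fixes f :: "nat \<Rightarrow> 'b \<Rightarrow> real"
  assumes "finite I" "\<forall>z\<in>I. bounded (range (\<lambda>k. f k z))"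
  shows "\<exists>r. strict_mono r \<and> (\<forall>z\<in>I. \<exists>l. (\<lambda>k. f (r k) z) \<longlonglongrightarrow> l)"
  using assms
proof (induction I rule: finite_induct)
  case empty
  then show ?case by (intro exI[of _ id]) (auto simp: strict_mono_def)
next
  case (insert z0 F)
  then obtain r where r: "strict_mono r" "\<forall>z\<in>F. \<exists>l. (\<lambda>k. f (r k) z) \<longlonglongrightarrow> l" by auto
  have "bounded (range (\<lambda>k. f (r k) z0))"
    by (rule bounded_subset[of "range (\<lambda>k. f k z0)"]) (use insert(4) in auto)
  then obtain l r' where r': "strict_mono r'" "((\<lambda>k. f (r k) z0) \<circ> r') \<longlonglongrightarrow> l"
    using bounded_imp_convergent_subsequence by blast
  have "\<exists>l. (\<lambda>k. f ((r \<circ> r') k) z) \<longlonglongrightarrow> l" if "z \<in> insert z0 F" for z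
    using that
  proof
    assume "z = z0" then show ?thesis using r'(2) by (auto simp: o_def)
  next
    assume "z \<in> F"
    then obtain l' where "(\<lambda>k. f (r k) z) \<longlonglongrightarrow> l'" using r(2) by auto
    from LIMSEQ_subseq_LIMSEQ[OF this r'(1)] show ?thesis by (auto simp: o_def)
  qed
  then show ?case using strict_mono_o[OF r(1) r'(1)] by blast
qed

lemma eventually_mult_powr_neg_less:
  fixes a C e :: real
  assumes "a < 0" "0 < e"
  shows "eventually (\<lambda>x. C * x powr a < e) at_top"
proof -
  have "((\<lambda>x. C * x powr a) \<longlongrightarrow> C * 0) at_top"
    by (intro tendsto_mult tendsto_const tendsto_neg_powr filterlim_ident) (use assms in simp)
  then show ?thesis using assms by (intro order_tendstoD) auto
qed

lemma eventually_mult_powr_over_nat_less: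
  fixes b C D e :: real
  assumes "0 \<le> D" "0 < b" "0 < e"
  shows "eventually (\<lambda>m::nat. C * (D / real m) powr b < e) sequentially"
proof -
  have "((\<lambda>m::nat. (D / real m) powr b) \<longlongrightarrow> 0) sequentially"
    by (rule tendsto_zero_powrI[where b=b]) (use assms in \<open>auto intro: lim_const_over_n\<close>)
  then have "((\<lambda>m::nat. C * (D / real m) powr b) \<longlongrightarrow> C * 0) sequentially"
    by (intro tendsto_intros)
  then show ?thesis using assms by (intro order_tendstoD) auto
qed

lemma finite_sum_sq_diff_eventually_le:
  fixes a :: "nat \<Rightarrow> 'b \<Rightarrow> real"
  assumes "finite I" "\<forall>z\<in>I. \<exists>l. (\<lambda>k. a k z) \<longlonglongrightarrow> l" "\<tau> > 0"
  shows "\<exists>N0. \<forall>i\<ge>N0. \<forall>j\<ge>N0. (\<Sum>z\<in>I. (a i z - a j z)\<^sup>2) \<le> \<tau>"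
proof -
  obtain l where l: "\<forall>z\<in>I. (\<lambda>k. a k z) \<longlonglongrightarrow> l z" using assms(2) by metis
  have "(\<lambda>k. \<Sum>z\<in>I. (a k z - l z)\<^sup>2) \<longlonglongrightarrow> (\<Sum>z\<in>I. (l z - l z)\<^sup>2)"
    using l by (intro tendsto_intros) auto
  then have "eventually (\<lambda>k. (\<Sum>z\<in>I. (a k z - l z)\<^sup>2) < \<tau> / 4) sequentially"
    using assms(3) by (intro order_tendstoD) auto
  then obtain N0 where N0: "\<And>k. k \<ge> N0 \<Longrightarrow> (\<Sum>z\<in>I. (a k z - l z)\<^sup>2) < \<tau> / 4"
    by (auto simp: eventually_sequentially)
  have "(\<Sum>z\<in>I. (a i z - a j z)\<^sup>2) \<le> \<tau>" if "i \<ge> N0" "j \<ge> N0" for i j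
  proof -
    have "(\<Sum>z\<in>I. (a i z - a j z)\<^sup>2) \<le> (\<Sum>z\<in>I. 2 * (a i z - l z)\<^sup>2 + 2 * (a j z - l z)\<^sup>2)"
    proof (rule sum_mono)
      fix z
      have "(a i z - a j z)\<^sup>2 \<le> 2 * ((a i z - a j z) - (a i z - l z))\<^sup>2 + 2 * (a i z - l z)\<^sup>2"
        by (rule sq_le_2_sq_diff_2_sq)
      also have "((a i z - a j z) - (a i z - l z))\<^sup>2 = (a j z - l z)\<^sup>2"
        by (simp add: power2_eq_square algebra_simps)
      finally show "(a i z - a j z)\<^sup>2 \<le> 2 * (a i z - l z)\<^sup>2 + 2 * (a j z - l z)\<^sup>2" by simp
    qed
    also have "\<dots> = 2 * (\<Sum>z\<in>I. (a i z - l z)\<^sup>2) + 2 * (\<Sum>z\<in>I. (a j z - l z)\<^sup>2)"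
      by (simp add: sum.distrib sum_distrib_left)
    also have "\<dots> \<le> \<tau>" using N0[OF that(1)] N0[OF that(2)] by simp
    finally show ?thesis .
  qed
  then show ?thesis by blast
qed

lemma subseq_fast_Cauchy:
  fixes d :: "nat \<Rightarrow> nat \<Rightarrow> ennreal"
  assumes close: "\<And>\<epsilon> (q :: nat \<Rightarrow> nat). 0 < \<epsilon> \<Longrightarrow> strict_mono q \<Longrightarrow>
    \<exists>r :: nat \<Rightarrow> nat. strict_mono r \<and> (\<forall>i j. d (q (r i)) (q (r j)) \<le> ennreal \<epsilon>)"
  shows "\<exists>r. strict_mono r \<and> (\<forall>i j. i \<le> j \<longrightarrow> d (r i) (r j) \<le> ennreal ((1/4) ^ i))"
proof -
  interpret subseqs "\<lambda>n (q :: nat \<Rightarrow> nat). \<forall>i j. d (q i) (q j) \<le> ennreal ((1/4) ^ n)"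
  proof unfold_locales
    fix n and q :: "nat \<Rightarrow> nat" assume "strict_mono q"
    then show "\<exists>r :: nat \<Rightarrow> nat. strict_mono r \<and> (\<forall>i j. d ((q \<circ> r) i) ((q \<circ> r) j) \<le> ennreal ((1/4) ^ n))"
      using close[of "(1/4) ^ n" q] by simp
  qed
  have diag: "\<forall>a b. d ((diagseq \<circ> (+) (Suc k)) a) ((diagseq \<circ> (+) (Suc k)) b) \<le> ennreal ((1/4) ^ k)" for k
    by (rule diagseq_holds) auto
  define r where "r i = diagseq (Suc i)" for i
  have "strict_mono r" using subseq_diagseq unfolding r_def strict_mono_def by simp
  moreover have "d (r i) (r j) \<le> ennreal ((1/4) ^ i)" if "i \<le> j" for i j
    using diag[of i, rule_format, of 0 "j - i"] that by (simp add: r_def)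
  ultimately show ?thesis by blast
qed

lemma convergent_of_fast_increments:
  fixes w :: "nat \<Rightarrow> real"
  assumes k: "0 < k" and fast: "\<And>i. 2 ^ i * (k * (w i - w (Suc i))\<^sup>2) \<le> S"
  shows "convergent w"
proof -
  define g where "g i = sqrt (S / k) * sqrt (1/2) ^ i" for i
  have "norm (w (Suc i) - w i) \<le> g i" for i
  proof -
    have "(w (Suc i) - w i)\<^sup>2 \<le> S / k * (1/2) ^ i"
      using fast[of i] k by (simp add: field_simps power2_commute power_one_over)
    then have "\<bar>w (Suc i) - w i\<bar> \<le> sqrt (S / k * (1/2) ^ i)" by (intro real_le_rsqrt) simp
    also have "\<dots> = g i" by (simp only: g_def real_sqrt_mult real_sqrt_power)
    finally show ?thesis by simp
  qed
  moreover have "summable g" unfolding g_def by (intro summable_mult summable_geometric) simp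
  ultimately have "summable (\<lambda>i. w (Suc i) - w i)" by (rule summable_comparison_test'[rotated])
  then have "(\<lambda>n. \<Sum>i<n. w (Suc i) - w i) \<longlonglongrightarrow> (\<Sum>i. w (Suc i) - w i)" by (rule summable_LIMSEQ)
  then have "(\<lambda>n. (w n - w 0) + w 0) \<longlonglongrightarrow> (\<Sum>i. w (Suc i) - w i) + w 0"
    by (intro tendsto_add tendsto_const) (simp add: sum_lessThan_telescope)
  then show ?thesis by (auto simp: convergent_def)
qed

lemma AE_convergent_of_weighted_fast_Cauchy:
  fixes w :: "nat \<Rightarrow> 'a::euclidean_space \<Rightarrow> real" and K :: "'a \<Rightarrow> real"
  assumes [measurable]: "\<And>k. w k \<in> borel_measurable lborel" "K \<in> borel_measurable lborel"
    and fast: "\<And>i. weighted_sq K (\<lambda>x. w i x - w (Suc i) x) \<le> ennreal ((1/4) ^ i)"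
  shows "AE x in lborel. 0 < K x \<longrightarrow> convergent (\<lambda>i. w i x)"
proof -
  define S where "S x = (\<Sum>i. ennreal (2 ^ i) * ennreal (K x * (w i x - w (Suc i) x)\<^sup>2))" for x
  have [measurable]: "S \<in> borel_measurable lborel" unfolding S_def by measurable
  have "(\<integral>\<^sup>+x. S x \<partial>lborel) = (\<Sum>i. ennreal (2 ^ i) * weighted_sq K (\<lambda>x. w i x - w (Suc i) x))"
    unfolding S_def weighted_sq_def by (subst nn_integral_suminf) (auto simp: nn_integral_cmult)
  also have "\<dots> \<le> (\<Sum>i. ennreal ((1/2) ^ i))"
  proof (rule suminf_le)
    fix i
    have "ennreal (2 ^ i) * weighted_sq K (\<lambda>x. w i x - w (Suc i) x) \<le> ennreal (2 ^ i) * ennreal ((1/4) ^ i)"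
      by (intro mult_left_mono fast) auto
    also have "\<dots> = ennreal ((1/2) ^ i)"
      by (simp add: ennreal_mult'[symmetric] power_mult_distrib[symmetric])
    finally show "ennreal (2 ^ i) * weighted_sq K (\<lambda>x. w i x - w (Suc i) x) \<le> ennreal ((1/2) ^ i)" .
  qed auto
  also have "\<dots> = ennreal 2"
    using suminf_geometric[of "1/2::real"] by (subst suminf_ennreal2) (auto intro: summable_geometric)
  finally have "AE x in lborel. S x \<noteq> \<infinity>" by (intro nn_integral_PInf_AE) (auto simp: top_unique)
  then show ?thesis
  proof eventually_elim
    case (elim x)
    then obtain S0 where S0: "S x = ennreal S0" "0 \<le> S0" by (cases "S x") auto
    have "2 ^ i * (K x * (w i x - w (Suc i) x)\<^sup>2) \<le> S0" if "0 < K x" for i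
    proof -
      have "(\<Sum>j\<in>{i}. ennreal (2 ^ j) * ennreal (K x * (w j x - w (Suc j) x)\<^sup>2)) \<le> S x"
        unfolding S_def by (rule sum_le_suminf) auto
      then have "ennreal (2 ^ i) * ennreal (K x * (w i x - w (Suc i) x)\<^sup>2) \<le> S x" by simp
      then show ?thesis using S0 that by (simp add: ennreal_mult'[symmetric] ennreal_le_iff)
    qed
    then show ?case using convergent_of_fast_increments[of "K x" "\<lambda>i. w i x" S0] by blast
  qed
qed

lemma weighted_sq_fast_Cauchy_limit:
  fixes w :: "nat \<Rightarrow> 'a::euclidean_space \<Rightarrow> real" and K :: "'a \<Rightarrow> real"
  assumes [measurable]: "\<And>k. w k \<in> borel_measurable lborel" "K \<in> borel_measurable lborel"
    and K: "\<And>x. 0 \<le> K x"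
    and fast: "\<And>i j. i \<le> j \<Longrightarrow> weighted_sq K (\<lambda>x. w i x - w j x) \<le> ennreal ((1/4) ^ i)"
    and fin0: "weighted_sq K (w 0) < \<infinity>"
  shows "\<exists>v. v \<in> borel_measurable lborel \<and> weighted_sq K v < \<infinity> \<and>
    (\<lambda>k. weighted_sq K (\<lambda>x. w k x - v x)) \<longlonglongrightarrow> 0"
proof -
  define v where "v x = lim (\<lambda>i. w i x)" for x
  have [measurable]: "v \<in> borel_measurable lborel"
    unfolding v_def by (rule borel_measurable_lim_metric) simp
  have AE: "AE x in lborel. 0 < K x \<longrightarrow> convergent (\<lambda>i. w i x)"
    by (rule AE_convergent_of_weighted_fast_Cauchy) (simp_all add: fast)
  have le: "weighted_sq K (\<lambda>x. w k x - v x) \<le> ennreal ((1/4) ^ k)" for k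
  proof -
    have "weighted_sq K (\<lambda>x. w k x - v x)
        \<le> (\<integral>\<^sup>+x. liminf (\<lambda>j. ennreal (K x * (w k x - w j x)\<^sup>2)) \<partial>lborel)"
      unfolding weighted_sq_def
    proof (rule nn_integral_mono_AE)
      show "AE x in lborel. ennreal (K x * (w k x - v x)\<^sup>2) \<le> liminf (\<lambda>j. ennreal (K x * (w k x - w j x)\<^sup>2))"
        using AE
      proof eventually_elim
        case (elim x)
        show ?case
        proof (cases "K x > 0")
          case True
          then have "(\<lambda>i. w i x) \<longlonglongrightarrow> v x" using elim by (simp add: v_def convergent_LIMSEQ_iff)
          then have "(\<lambda>j. ennreal (K x * (w k x - w j x)\<^sup>2)) \<longlonglongrightarrow> ennreal (K x * (w k x - v x)\<^sup>2)"
            by (intro tendsto_ennrealI tendsto_intros)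
          then show ?thesis by (simp add: lim_imp_Liminf)
        next
          case False
          then show ?thesis using K[of x] by simp
        qed
      qed
    qed
    also have "\<dots> \<le> liminf (\<lambda>j. weighted_sq K (\<lambda>x. w k x - w j x))"
      unfolding weighted_sq_def by (rule nn_integral_liminf) simp
    also have "\<dots> \<le> limsup (\<lambda>j. weighted_sq K (\<lambda>x. w k x - w j x))"
      by (rule Liminf_le_Limsup) simp
    also have "\<dots> \<le> ennreal ((1/4) ^ k)"
      by (rule Limsup_bounded) (auto simp: eventually_sequentially intro!: exI[of _ k] fast)
    finally show ?thesis .
  qed
  have "(\<lambda>k. weighted_sq K (\<lambda>x. w k x - v x)) \<longlonglongrightarrow> 0"
  proof (rule tendsto_sandwich[of "\<lambda>_. 0" _ _ "\<lambda>k. ennreal ((1/4) ^ k)"])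
    show "(\<lambda>k. ennreal ((1/4) ^ k)) \<longlonglongrightarrow> 0"
      using tendsto_ennrealI[OF LIMSEQ_power_zero[of "1/4::real"]] by simp
  qed (use le in auto)
  moreover have "weighted_sq K v < \<infinity>"
  proof -
    have "weighted_sq K v = weighted_sq K (\<lambda>x. w 0 x - (w 0 x - v x))" by simp
    also have "\<dots> \<le> 2 * weighted_sq K (w 0) + 2 * weighted_sq K (\<lambda>x. w 0 x - v x)"
      by (rule weighted_sq_diff_le) (simp_all add: K)
    also have "\<dots> \<le> 2 * weighted_sq K (w 0) + 2 * ennreal ((1/4) ^ 0)"
      by (intro add_mono mult_left_mono le) auto
    also have "\<dots> < \<infinity>" using fin0 by (simp add: ennreal_mult_less_top)
    finally show ?thesis .
  qed
  ultimately show ?thesis by (blast intro: \<open>v \<in> borel_measurable lborel\<close>)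
qed

lemma HsV_norm_sq_bounds:
  assumes "HsV_norm_sq s eps V u \<le> ennreal C" "0 < eps"
  shows "gagliardo_sq s u \<le> ennreal (max C 0 / eps powr (2 * s))" "weighted_sq V u \<le> ennreal (max C 0)"
proof -
  define e where "e = eps powr (2 * s)"
  have e: "0 < e" using assms(2) by (simp add: e_def)
  have norm: "ennreal e * gagliardo_sq s u + weighted_sq V u \<le> ennreal (max C 0)"
    using assms(1) by (auto simp: HsV_norm_sq_def e_def intro: order_trans ennreal_leI)
  then show "weighted_sq V u \<le> ennreal (max C 0)"
    by (rule order_trans[rotated]) simp
  have "gagliardo_sq s u = ennreal (1 / e) * (ennreal e * gagliardo_sq s u)"
    using e by (simp add: mult.assoc[symmetric] ennreal_mult[symmetric])
  also have "\<dots> \<le> ennreal (1 / e) * ennreal (max C 0)"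
    using norm by (intro mult_left_mono) (auto intro: order_trans[rotated])
  also have "\<dots> = ennreal (max C 0 / e)" using e by (simp add: ennreal_mult[symmetric])
  finally show "gagliardo_sq s u \<le> ennreal (max C 0 / eps powr (2 * s))" unfolding e_def .
qed

locale decaying_weights =
  fixes s t c0 B R :: real and V K :: "'a::euclidean_space \<Rightarrow> real"
  assumes s_pos: "0 < s" and t_gt: "2 * s < t"
    and c0_pos: "0 < c0" and B_pos: "0 < B" and R_pos: "0 < R"
    and V_cont: "continuous_on UNIV V" and K_cont: "continuous_on UNIV K"
    and V_nonneg: "\<And>x. 0 \<le> V x" and K_nonneg: "\<And>x. 0 \<le> K x"
    and V_lower: "\<And>x. R \<le> norm x \<Longrightarrow> c0 \<le> V x * norm x powr (2 * s)"
    and K_upper: "\<And>x. R \<le> norm x \<Longrightarrow> K x * norm x powr t \<le> B"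
begin

lemma V_borel[measurable]: "V \<in> borel_measurable lborel"
  using borel_measurable_continuous_onI[OF V_cont] by simp

lemma K_borel[measurable]: "K \<in> borel_measurable lborel"
  using borel_measurable_continuous_onI[OF K_cont] by simp

lemma K_le_V_far:
  assumes "R \<le> L" "L \<le> norm x"
  shows "K x \<le> B / c0 * L powr (2 * s - t) * V x"
proof -
  define n where "n = norm x"
  have n: "L \<le> n" "0 < n" "R \<le> n" using assms R_pos by (auto simp: n_def)
  have "K x \<le> B / n powr t" using K_upper[of x] n by (simp add: n_def pos_le_divide_eq)
  also have "B / n powr t = B / c0 * n powr (2 * s - t) * (c0 / n powr (2 * s))"
    using n c0_pos by (simp add: powr_diff field_simps)
  also have "\<dots> \<le> B / c0 * L powr (2 * s - t) * V x"
  proof (intro mult_mono mult_left_mono)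
    show "n powr (2 * s - t) \<le> L powr (2 * s - t)" using t_gt n assms R_pos by (intro powr_mono2') auto
    show "c0 / n powr (2 * s) \<le> V x" using V_lower[of x] n by (simp add: n_def pos_divide_le_eq)
  qed (use B_pos c0_pos V_nonneg in auto)
  finally show ?thesis .
qed

lemma weighted_sq_K_le:
  assumes "R \<le> L" and M: "\<forall>x\<in>centred_box L. K x \<le> M" "0 \<le> M"
    and [measurable]: "w \<in> borel_measurable lborel"
  shows "weighted_sq K w \<le> ennreal M * (\<integral>\<^sup>+x. indicator (centred_box L) x * ennreal ((w x)\<^sup>2) \<partial>lborel)
    + ennreal (B / c0 * L powr (2 * s - t)) * weighted_sq V w"
proof -
  define \<eta> where "\<eta> = B / c0 * L powr (2 * s - t)"
  have \<eta>: "0 \<le> \<eta>" using B_pos c0_pos by (simp add: \<eta>_def)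
  have "ennreal (K x * (w x)\<^sup>2)
      \<le> ennreal M * (indicator (centred_box L) x * ennreal ((w x)\<^sup>2)) + ennreal \<eta> * ennreal (V x * (w x)\<^sup>2)" for x
  proof (cases "x \<in> centred_box L")
    case True
    then have "ennreal (K x * (w x)\<^sup>2) \<le> ennreal (M * (w x)\<^sup>2)"
      using M by (intro ennreal_leI mult_right_mono) auto
    also have "\<dots> = ennreal M * ennreal ((w x)\<^sup>2)" using M by (intro ennreal_mult') simp
    finally show ?thesis using True by (intro add_increasing2) simp_all
  next
    case False
    then have "K x \<le> \<eta> * V x"
      unfolding \<eta>_def using assms(1) norm_ge_outside_centred_box by (intro K_le_V_far)
    then have "ennreal (K x * (w x)\<^sup>2) \<le> ennreal (\<eta> * (V x * (w x)\<^sup>2))"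
      by (intro ennreal_leI) (simp add: mult.assoc[symmetric] mult_right_mono)
    also have "\<dots> = ennreal \<eta> * ennreal (V x * (w x)\<^sup>2)" by (rule ennreal_mult'[OF \<eta>])
    finally show ?thesis by (rule add_increasing[OF zero_le])
  qed
  then have "weighted_sq K w \<le> (\<integral>\<^sup>+x. ennreal M * (indicator (centred_box L) x * ennreal ((w x)\<^sup>2))
      + ennreal \<eta> * ennreal (V x * (w x)\<^sup>2) \<partial>lborel)"
    unfolding weighted_sq_def by (intro nn_integral_mono)
  also have "\<dots> = ennreal M * (\<integral>\<^sup>+x. indicator (centred_box L) x * ennreal ((w x)\<^sup>2) \<partial>lborel)
      + ennreal \<eta> * weighted_sq V w"
    unfolding weighted_sq_def by (subst nn_integral_add) (auto simp: nn_integral_cmult)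
  finally show ?thesis unfolding \<eta>_def .
qed

text \<open>V is bounded below on the outer unit cube, which lies beyond radius R.\<close>
lemma centred_box_L2_le:
  assumes "R \<le> L"
  shows "\<exists>a b. 0 \<le> a \<and> 0 \<le> b \<and> (\<forall>u \<in> borel_measurable lborel.
    (\<integral>\<^sup>+x. indicator (centred_box L) x * ennreal ((u x)\<^sup>2) \<partial>lborel)
      \<le> ennreal a * gagliardo_sq s u + ennreal b * weighted_sq V u)"
proof -
  define N where "N = real DIM('a)"
  define A where "A = (outer_unit_cube L :: 'a set)"
  define mQ where "mQ = measure lborel (centred_box L :: 'a set)"
  define cA where "cA = c0 / (N * (L + 1)) powr (2 * s)"
  have L0: "0 < L" using assms R_pos by simp
  have cA: "0 < cA" using c0_pos L0 by (simp add: cA_def N_def)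
  have VA: "\<forall>y\<in>A. cA \<le> V y"
  proof
    fix y assume y: "y \<in> A"
    then have y_norm: "R \<le> norm y" "norm y \<le> N * (L + 1)"
      using norm_outer_unit_cube[of y L] assms L0 unfolding A_def N_def by auto
    have "c0 \<le> V y * norm y powr (2 * s)" using V_lower y_norm(1) by simp
    also have "\<dots> \<le> V y * (N * (L + 1)) powr (2 * s)"
      by (intro mult_left_mono powr_mono2) (use y_norm s_pos V_nonneg in auto)
    finally show "cA \<le> V y" unfolding cA_def using L0 by (simp add: N_def pos_divide_le_eq)
  qed
  have mQ: "emeasure lborel (centred_box L :: 'a set) = ennreal mQ" "0 \<le> mQ"
    using emeasure_centred_box_finite[of L, where 'a='a]
    by (simp_all add: mQ_def emeasure_eq_ennreal_measure less_top[symmetric])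
  define a where "a = 2 * (N * (2 * L + 1)) powr (N + 2 * s)"
  define b where "b = mQ * (2 * (1 / cA))"
  have "(\<integral>\<^sup>+x. indicator (centred_box L) x * ennreal ((u x)\<^sup>2) \<partial>lborel)
      \<le> ennreal a * gagliardo_sq s u + ennreal b * weighted_sq V u" if [measurable]: "u \<in> borel_measurable lborel" for u
  proof -
    have "(\<integral>\<^sup>+x. indicator (centred_box L) x * ennreal ((u x)\<^sup>2) \<partial>lborel)
        = emeasure lborel A * (\<integral>\<^sup>+x. indicator (centred_box L) x * ennreal ((u x)\<^sup>2) \<partial>lborel)"
      by (simp add: A_def emeasure_outer_unit_cube)
    also have "\<dots> \<le> 2 * ennreal ((N * (2 * L + 1)) powr (N + 2 * s)) * gagliardo_sq s u
        + ennreal mQ * (2 * ennreal (1 / cA) * weighted_sq V u)"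
      unfolding N_def mQ(1)[symmetric] using dist_centred_box_outer_unit_cube
      by (intro L2_on_set_le_gagliardo_weighted s_pos cA VA) (auto simp: A_def outer_unit_cube_def)
    also have "\<dots> = ennreal a * gagliardo_sq s u + ennreal b * weighted_sq V u"
    proof -
      have "ennreal b = ennreal mQ * ennreal (2 * (1 / cA))"
        unfolding b_def by (intro ennreal_mult) (use mQ(2) cA in auto)
      also have "ennreal (2 * (1 / cA)) = 2 * ennreal (1 / cA)"
        by (subst ennreal_mult'[of 2]) simp_all
      finally have "ennreal b = ennreal mQ * (2 * ennreal (1 / cA))" .
      moreover have "ennreal a = 2 * ennreal ((N * (2 * L + 1)) powr (N + 2 * s))"
        unfolding a_def by (simp add: ennreal_mult')
      ultimately show ?thesis by (simp add: mult.assoc)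
    qed
    finally show ?thesis .
  qed
  moreover have "0 \<le> a" "0 \<le> b" using mQ cA by (simp_all add: a_def b_def)
  ultimately show ?thesis by blast
qed

lemma weighted_sq_K_finite:
  assumes [measurable]: "u \<in> borel_measurable lborel"
    and "gagliardo_sq s u < \<infinity>" "weighted_sq V u < \<infinity>"
  shows "weighted_sq K u < \<infinity>"
proof -
  obtain M where M: "0 < M" "\<forall>x\<in>centred_box R. K x \<le> M"
    using continuous_bounded_on_centred_box[OF K_cont] by blast
  obtain a b where "0 \<le> a" "0 \<le> b" and ab: "\<forall>u \<in> borel_measurable lborel.
    (\<integral>\<^sup>+x. indicator (centred_box R) x * ennreal ((u x)\<^sup>2) \<partial>lborel)
      \<le> ennreal a * gagliardo_sq s u + ennreal b * weighted_sq V u"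
    using centred_box_L2_le[of R] by auto
  have "weighted_sq K u \<le> ennreal M * (\<integral>\<^sup>+x. indicator (centred_box R) x * ennreal ((u x)\<^sup>2) \<partial>lborel)
      + ennreal (B / c0 * R powr (2 * s - t)) * weighted_sq V u"
    using M by (intro weighted_sq_K_le) auto
  also have "\<dots> \<le> ennreal M * (ennreal a * gagliardo_sq s u + ennreal b * weighted_sq V u)
      + ennreal (B / c0 * R powr (2 * s - t)) * weighted_sq V u"
    using ab assms(1) by (intro add_mono mult_left_mono order_refl) auto
  also have "\<dots> < \<infinity>" using assms by (simp add: ennreal_mult_less_top)
  finally show ?thesis .
qed

lemma centred_box_L2_bounded:
  fixes u :: "nat \<Rightarrow> 'a \<Rightarrow> real"
  assumes "R \<le> L" and [measurable]: "\<And>k. u k \<in> borel_measurable lborel"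
    and G: "\<And>k. gagliardo_sq s (u k) \<le> ennreal CG" and W: "\<And>k. weighted_sq V (u k) \<le> ennreal CW"
    and "0 \<le> CG" "0 \<le> CW"
  shows "\<exists>H. 0 \<le> H \<and> (\<forall>k. (\<integral>\<^sup>+x. indicator (centred_box L) x * ennreal ((u k x)\<^sup>2) \<partial>lborel) \<le> ennreal H)"
proof -
  obtain a b where ab: "0 \<le> a" "0 \<le> b" "\<forall>u \<in> borel_measurable lborel.
    (\<integral>\<^sup>+x. indicator (centred_box L) x * ennreal ((u x)\<^sup>2) \<partial>lborel)
      \<le> ennreal a * gagliardo_sq s u + ennreal b * weighted_sq V u"
    using centred_box_L2_le[OF assms(1)] by blast
  have "(\<integral>\<^sup>+x. indicator (centred_box L) x * ennreal ((u k x)\<^sup>2) \<partial>lborel) \<le> ennreal (a * CG + b * CW)" for k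
  proof -
    have "(\<integral>\<^sup>+x. indicator (centred_box L) x * ennreal ((u k x)\<^sup>2) \<partial>lborel)
        \<le> ennreal a * gagliardo_sq s (u k) + ennreal b * weighted_sq V (u k)"
      using ab(3) assms(2)[of k] by auto
    also have "\<dots> \<le> ennreal a * ennreal CG + ennreal b * ennreal CW"
      by (intro add_mono mult_left_mono G W) auto
    also have "\<dots> = ennreal (a * CG + b * CW)" using ab assms(5,6) by (intro ennreal_mult_add) auto
    finally show ?thesis .
  qed
  moreover have "0 \<le> a * CG + b * CW" using ab assms(5,6) by simp
  ultimately show ?thesis by blast
qed

lemma weighted_sq_K_diff_le:
  fixes f g :: "'a \<Rightarrow> real" and cf cg :: "('a \<Rightarrow> int) \<Rightarrow> real"
  assumes "R \<le> L" "0 < m" and M: "\<forall>x\<in>centred_box L. K x \<le> M" "0 \<le> M"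
    and [measurable]: "f \<in> borel_measurable lborel" "g \<in> borel_measurable lborel"
    and devf: "(\<Sum>z\<in>grid_index m.
      \<integral>\<^sup>+x. indicator (grid_cell L (2 * L / m) z) x * ennreal ((f x - cf z)\<^sup>2) \<partial>lborel) \<le> ennreal D"
    and devg: "(\<Sum>z\<in>grid_index m.
      \<integral>\<^sup>+x. indicator (grid_cell L (2 * L / m) z) x * ennreal ((g x - cg z)\<^sup>2) \<partial>lborel) \<le> ennreal D"
    and cfg: "(\<Sum>z\<in>grid_index m. (cf z - cg z)\<^sup>2) \<le> \<tau>"
    and Vf: "weighted_sq V f \<le> ennreal CW" and Vg: "weighted_sq V g \<le> ennreal CW"
    and D: "0 \<le> D" and CW: "0 \<le> CW"
  shows "weighted_sq K (\<lambda>x. f x - g x) \<le> ennreal (M * (6 * D + 3 * \<tau> * measure lborel (centred_box L :: 'a set))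
    + B / c0 * L powr (2 * s - t) * (4 * CW))"
proof -
  define mQ where "mQ = measure lborel (centred_box L :: 'a set)"
  define \<eta> where "\<eta> = B / c0 * L powr (2 * s - t)"
  have "emeasure lborel (centred_box L :: 'a set) \<noteq> \<infinity>"
    using emeasure_centred_box_finite[of L, where 'a='a] by simp
  then have mQ: "emeasure lborel (centred_box L :: 'a set) = ennreal mQ" "0 \<le> mQ"
    unfolding mQ_def by (simp_all add: emeasure_eq_ennreal_measure)
  have \<eta>: "0 \<le> \<eta>" using B_pos c0_pos by (simp add: \<eta>_def)
  have \<tau>: "0 \<le> \<tau>" using cfg sum_nonneg[of "grid_index m" "\<lambda>z. (cf z - cg z)\<^sup>2"] by simp
  have L0: "0 < L" using assms(1) R_pos by simp
  have "(\<integral>\<^sup>+x. indicator (centred_box L) x * ennreal ((f x - g x)\<^sup>2) \<partial>lborel)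
      \<le> 3 * ennreal D + 3 * ennreal D + 3 * (ennreal \<tau> * ennreal mQ)"
    using centred_box_L2_dist_le_cell_devs[OF L0 assms(2), of f g cf cg] devf devg cfg mQ(1)
    by (auto intro!: add_mono mult_left_mono mult_right_mono ennreal_leI elim!: order_trans)
  also have "\<dots> = ennreal (3 * D) + ennreal (3 * D) + ennreal (3 * (\<tau> * mQ))"
    using \<tau> by (simp add: ennreal_mult')
  also have "\<dots> = ennreal (6 * D + 3 * \<tau> * mQ)"
    using D \<tau> mQ(2) by (subst ennreal_plus3) (simp_all add: algebra_simps)
  finally have box: "(\<integral>\<^sup>+x. indicator (centred_box L) x * ennreal ((f x - g x)\<^sup>2) \<partial>lborel)
      \<le> ennreal (6 * D + 3 * \<tau> * mQ)" .
  have "weighted_sq V (\<lambda>x. f x - g x) \<le> 2 * weighted_sq V f + 2 * weighted_sq V g"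
    by (rule weighted_sq_diff_le) (simp_all add: V_nonneg)
  also have "\<dots> \<le> 2 * ennreal CW + 2 * ennreal CW" by (intro add_mono mult_left_mono Vf Vg) auto
  also have "\<dots> = ennreal (2 * CW + 2 * CW)" by (rule ennreal_2_mul_add[symmetric]) (use CW in auto)
  finally have far: "weighted_sq V (\<lambda>x. f x - g x) \<le> ennreal (4 * CW)" by simp
  have "weighted_sq K (\<lambda>x. f x - g x)
      \<le> ennreal M * (\<integral>\<^sup>+x. indicator (centred_box L) x * ennreal ((f x - g x)\<^sup>2) \<partial>lborel)
        + ennreal \<eta> * weighted_sq V (\<lambda>x. f x - g x)"
    unfolding \<eta>_def using assms(1) M by (intro weighted_sq_K_le) auto
  also have "\<dots> \<le> ennreal M * ennreal (6 * D + 3 * \<tau> * mQ) + ennreal \<eta> * ennreal (4 * CW)"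
    by (intro add_mono mult_left_mono box far) auto
  also have "\<dots> = ennreal (M * (6 * D + 3 * \<tau> * mQ) + \<eta> * (4 * CW))"
    using M D \<tau> mQ(2) \<eta> CW by (intro ennreal_mult_add) auto
  finally show ?thesis unfolding mQ_def \<eta>_def .
qed

text \<open>Choose L so large that the part of the K-norm beyond L is below \<epsilon>/3, then the mesh so
  fine that the Poincare error on the box is below \<epsilon>/3, then a subsequence along which the
  finitely many cell constants are Cauchy.\<close>
lemma bounded_seq_close_subseq:
  fixes u :: "nat \<Rightarrow> 'a \<Rightarrow> real"
  assumes um[measurable]: "\<And>k. u k \<in> borel_measurable lborel"
    and G: "\<And>k. gagliardo_sq s (u k) \<le> ennreal CG" and W: "\<And>k. weighted_sq V (u k) \<le> ennreal CW"
    and CG: "0 \<le> CG" and CW: "0 \<le> CW" and \<epsilon>: "0 < \<epsilon>"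
  shows "\<exists>r :: nat \<Rightarrow> nat. strict_mono r \<and>
    (\<forall>i j. weighted_sq K (\<lambda>x. u (r i) x - u (r j) x) \<le> ennreal \<epsilon>)"
proof -
  define N where "N = real DIM('a)"
  have "eventually (\<lambda>L. B / c0 * (4 * CW) * L powr (2 * s - t) < \<epsilon> / 3) at_top"
    using t_gt \<epsilon> by (intro eventually_mult_powr_neg_less) auto
  from eventually_conj[OF this eventually_ge_at_top[of R]]
  obtain L where L: "R \<le> L" "B / c0 * L powr (2 * s - t) * (4 * CW) < \<epsilon> / 3"
    by (auto simp: eventually_at_top_linorder mult_ac)
  have L0: "0 < L" using L R_pos by simp
  obtain M where M: "0 < M" "\<forall>x\<in>centred_box L. K x \<le> M"
    using continuous_bounded_on_centred_box[OF K_cont] by blast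
  obtain HQ where HQ: "\<And>k. (\<integral>\<^sup>+x. indicator (centred_box L) x * ennreal ((u k x)\<^sup>2) \<partial>lborel)
      \<le> ennreal HQ" "0 \<le> HQ"
    using centred_box_L2_bounded[of L u CG CW, OF L(1) um G W CG CW] by blast
  define \<kappa> where "\<kappa> m = N powr (N + 2 * s) * (2 * L / real m) powr (2 * s)" for m :: nat
  have "eventually (\<lambda>m. M * 6 * N powr (N + 2 * s) * CG * (2 * L / real m) powr (2 * s) < \<epsilon> / 3)
    sequentially"
    using s_pos L0 \<epsilon> by (intro eventually_mult_powr_over_nat_less) auto
  then have "eventually (\<lambda>m. M * 6 * \<kappa> m * CG < \<epsilon> / 3) sequentially"
    by (simp add: \<kappa>_def mult_ac)
  from eventually_conj[OF this eventually_gt_at_top[of 0]]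
  obtain m where m: "0 < m" "M * 6 * \<kappa> m * CG < \<epsilon> / 3"
    by (auto simp: eventually_sequentially)
  obtain c where c: "\<And>k. (\<Sum>z\<in>grid_index m.
      \<integral>\<^sup>+x. indicator (grid_cell L (2 * L / m) z) x * ennreal ((u k x - c k z)\<^sup>2) \<partial>lborel)
        \<le> ennreal (\<kappa> m * CG)"
    and c_bounded: "\<forall>z\<in>grid_index m. bounded (range (\<lambda>k. c k z))"
    using grid_constants_bounded[of s L m u, OF s_pos L0 m(1) um G CG HQ]
    unfolding \<kappa>_def N_def by auto
  obtain r where r: "strict_mono r" "\<forall>z\<in>grid_index m. \<exists>l. (\<lambda>k. c (r k) z) \<longlonglongrightarrow> l"
    using finite_family_convergent_subseq[OF _ c_bounded] by auto
  define mQ where "mQ = measure lborel (centred_box L :: 'a set)"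
  define \<tau> where "\<tau> = \<epsilon> / (9 * (M * mQ + 1))"
  have MmQ: "0 \<le> M * mQ" using M by (simp add: mQ_def)
  have \<tau>: "0 < \<tau>" unfolding \<tau>_def using \<epsilon> MmQ by (intro divide_pos_pos) auto
  obtain N0 where N0: "\<forall>i\<ge>N0. \<forall>j\<ge>N0. (\<Sum>z\<in>grid_index m. (c (r i) z - c (r j) z)\<^sup>2) \<le> \<tau>"
    using finite_sum_sq_diff_eventually_le[OF _ r(2) \<tau>] by auto
  have close: "weighted_sq K (\<lambda>x. u i x - u j x) \<le> ennreal \<epsilon>"
    if "(\<Sum>z\<in>grid_index m. (c i z - c j z)\<^sup>2) \<le> \<tau>" for i j
  proof -
    have "weighted_sq K (\<lambda>x. u i x - u j x)
        \<le> ennreal (M * (6 * (\<kappa> m * CG) + 3 * \<tau> * mQ) + B / c0 * L powr (2 * s - t) * (4 * CW))"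
      unfolding mQ_def
      by (rule weighted_sq_K_diff_le[OF L(1) m(1) M(2) less_imp_le[OF M(1)] um um c c that W W])
        (use CG CW in \<open>simp_all add: \<kappa>_def\<close>)
    also have "\<dots> \<le> ennreal \<epsilon>"
    proof (rule ennreal_leI)
      have "M * (3 * \<tau> * mQ) = \<epsilon> / 3 * (M * mQ / (M * mQ + 1))"
        unfolding \<tau>_def using MmQ by (simp add: field_simps)
      also have "\<dots> \<le> \<epsilon> / 3" using MmQ \<epsilon> by (simp add: field_simps)
      finally have "M * (3 * \<tau> * mQ) \<le> \<epsilon> / 3" .
      moreover have "M * (6 * (\<kappa> m * CG)) < \<epsilon> / 3" using m(2) by (simp add: mult_ac)
      ultimately show "M * (6 * (\<kappa> m * CG) + 3 * \<tau> * mQ) + B / c0 * L powr (2 * s - t) * (4 * CW) \<le> \<epsilon>"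
        using L(2) by (simp only: distrib_left)
    qed
    finally show ?thesis .
  qed
  have "strict_mono (\<lambda>k. r (k + N0)) \<and>
      (\<forall>i j. weighted_sq K (\<lambda>x. u (r (i + N0)) x - u (r (j + N0)) x) \<le> ennreal \<epsilon>)"
    using r(1) close N0 by (simp add: strict_mono_def)
  then show ?thesis by (auto intro!: exI[of _ "\<lambda>k. r (k + N0)"])
qed

lemma compact_embedding:
  assumes "0 < eps"
  shows "compact_embedding_HsV_L2w s eps V K"
  unfolding compact_embedding_HsV_L2w_def
proof (intro conjI allI impI)
  show "HsV s eps V \<subseteq> L2w K"
    unfolding HsV_def L2w_def using weighted_sq_K_finite by blast
next
  fix u :: "nat \<Rightarrow> 'a \<Rightarrow> real" and C :: real
  assume uC: "\<forall>k. u k \<in> HsV s eps V \<and> HsV_norm_sq s eps V (u k) \<le> ennreal C"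
  have [measurable]: "u k \<in> borel_measurable lborel" for k using uC by (simp add: HsV_def)
  obtain r where r: "strict_mono r"
    "\<And>i j. i \<le> j \<Longrightarrow> weighted_sq K (\<lambda>x. u (r i) x - u (r j) x) \<le> ennreal ((1/4) ^ i)"
  proof -
    have "\<exists>r :: nat \<Rightarrow> nat. strict_mono r \<and>
        (\<forall>i j. weighted_sq K (\<lambda>x. u (q (r i)) x - u (q (r j)) x) \<le> ennreal \<epsilon>)"
      if "0 < \<epsilon>" for \<epsilon> and q :: "nat \<Rightarrow> nat"
    proof (rule bounded_seq_close_subseq[of "\<lambda>k. u (q k)" "max C 0 / eps powr (2 * s)" "max C 0"])
      show "gagliardo_sq s (u (q k)) \<le> ennreal (max C 0 / eps powr (2 * s))" for k
        using HsV_norm_sq_bounds(1)[OF _ assms] uC by blast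
      show "weighted_sq V (u (q k)) \<le> ennreal (max C 0)" for k
        using HsV_norm_sq_bounds(2)[OF _ assms] uC by blast
    qed (use that assms in auto)
    then show ?thesis
      using subseq_fast_Cauchy[of "\<lambda>i j. weighted_sq K (\<lambda>x. u i x - u j x)"] that by blast
  qed
  obtain v where "v \<in> borel_measurable lborel" "weighted_sq K v < \<infinity>"
    "(\<lambda>k. weighted_sq K (\<lambda>x. u (r k) x - v x)) \<longlonglongrightarrow> 0"
    using weighted_sq_fast_Cauchy_limit[of "\<lambda>k. u (r k)" K] r(2) K_nonneg uC
      weighted_sq_K_finite[of "u (r 0)"] by (auto simp: HsV_def)
  then show "\<exists>r v. strict_mono r \<and> v \<in> L2w K \<and> (\<lambda>k. weighted_sq K (\<lambda>x. u (r k) x - v x)) \<longlonglongrightarrow> 0"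
    using r(1) by (auto simp: L2w_def)
qed

end

lemma Liminf_at_infinity_pos_imp_eventually_ge:
  fixes f :: "'a::real_normed_vector \<Rightarrow> real"
  assumes "Liminf at_infinity (\<lambda>x. ereal (f x)) > 0"
  shows "\<exists>c R. 0 < c \<and> 0 < R \<and> (\<forall>x. R \<le> norm x \<longrightarrow> c \<le> f x)"
proof -
  obtain c where c: "0 < ereal c" "ereal c < Liminf at_infinity (\<lambda>x. ereal (f x))"
    using ereal_dense2[OF assms] by blast
  have "eventually (\<lambda>x. ereal c < ereal (f x)) at_infinity" by (rule less_LiminfD[OF c(2)])
  then obtain R where "\<And>x. R \<le> norm x \<Longrightarrow> c < f x" by (auto simp: eventually_at_infinity)
  then have "0 < c \<and> 0 < max R 1 \<and> (\<forall>x. max R 1 \<le> norm x \<longrightarrow> c \<le> f x)"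
    using c(1) by (auto intro: less_imp_le)
  then show ?thesis by blast
qed

lemma Limsup_at_infinity_finite_imp_eventually_le:
  fixes f :: "'a::real_normed_vector \<Rightarrow> real"
  assumes "Limsup at_infinity (\<lambda>x. ereal (f x)) < \<infinity>"
  shows "\<exists>B R. 0 < B \<and> 0 < R \<and> (\<forall>x. R \<le> norm x \<longrightarrow> f x \<le> B)"
proof -
  obtain B where B: "Limsup at_infinity (\<lambda>x. ereal (f x)) < ereal B"
    using ereal_dense2[OF assms] by blast
  have "eventually (\<lambda>x. ereal (f x) < ereal B) at_infinity" by (rule Limsup_lessD[OF B])
  then obtain R where "\<And>x. R \<le> norm x \<Longrightarrow> f x < B" by (auto simp: eventually_at_infinity)
  then have "0 < max B 1 \<and> 0 < max R 1 \<and> (\<forall>x. max R 1 \<le> norm x \<longrightarrow> f x \<le> max B 1)"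
    by (auto intro: less_imp_le order_trans[OF _ max.cobounded1])
  then show ?thesis by blast
qed

theorem corollary4p3:
  fixes s eps t :: real and V K :: "'a::euclidean_space \<Rightarrow> real"
  assumes "0 < s" "s < 1" "real DIM('a) > 2 * s" "eps > 0"
    and "continuous_on UNIV V" "\<forall>x. V x \<ge> 0"
    and "Liminf at_infinity (\<lambda>x. ereal (V x * norm x powr (2 * s))) > 0"
    and "continuous_on UNIV K" "\<forall>x. K x \<ge> 0"
    and "t > 2 * s"
    and "Limsup at_infinity (\<lambda>x. ereal (K x * norm x powr t)) < \<infinity>"
  shows "compact_embedding_HsV_L2w s eps V K"
proof -
  obtain c0 R1 where V: "0 < c0" "0 < R1" "\<forall>x. R1 \<le> norm x \<longrightarrow> c0 \<le> V x * norm x powr (2 * s)"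
    using Liminf_at_infinity_pos_imp_eventually_ge[OF assms(7)] by blast
  obtain B R2 where K: "0 < B" "0 < R2" "\<forall>x. R2 \<le> norm x \<longrightarrow> K x * norm x powr t \<le> B"
    using Limsup_at_infinity_finite_imp_eventually_le[OF assms(11)] by blast
  interpret decaying_weights s t c0 B "max R1 R2" V K
    using assms V K by unfold_locales auto
  show ?thesis using compact_embedding[OF assms(4)] .
qed

end
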